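(* (a) Let $\psi:\Sigma\to\mathbb{H}^2\times\mathbb{R}$ be a conformal immersion of a connected Riemann surface with regular vertical projection and constant mean curvature $1/2$ with respect to its canonical orientation, whose hyperbolic Gauss map $G$ is conformal, i.e. $\langle G_z,G_z\rangle\equiv0$. Then there exist $a\in\mathbb{H}^2$ and $c\in\mathbb{R}$ with $$\psi=(-a,c)-2\langle a,G\rangle\,(G,1)\qquad\text{in }\mathbb{L}^4=\mathbb{L}^3\times\mathbb{R}.$$ (b) Conversely, if $G:\Sigma\to\mathbb{H}^2$ is a conformal immersion and $a\in\mathbb{H}^2$, then $\psi=(-a,0)-2\langle a,G\rangle(G,1)$ is a conformal immersion into $\mathbb{H}^2\times\mathbb{R}$ with regular vertical projection, constant mean curvature $1/2$ with respect to its canonical orientation, and hyperbolic Gauss map $G$.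
   Context: $\mathbb{L}^4=(\mathbb{R}^4,\langle,\rangle=-dx_0^2+dx_1^2+dx_2^2+dx_3^2)$, $\mathbb{L}^3$ the first three coordinates, $\mathbb{H}^2=\{x\in\mathbb{L}^3:\langle x,x\rangle=-1,x_0>0\}$, $\mathbb{H}^2\times\mathbb{R}\subset\mathbb{L}^4$. For $\psi=(N,h)$: $\eta=(\hat N,u)$ is the unit normal tangent to $\mathbb{H}^2\times\mathbb{R}$, $u$ the angle function; regular vertical projection means $u\ne0$ everywhere, canonical orientation $u>0$; hyperbolic Gauss map $G:\Sigma\to\mathbb{H}^2$ defined by $(G,1)=(\eta+N)/u$. *)

theory Defs
  imports "HOL-Analysis.Analysis"
begin

type_synonym L3 = "real \<times> real \<times> real"
type_synonym L4 = "L3 \<times> real"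

definition lor3 :: "L3 \<Rightarrow> L3 \<Rightarrow> real" where
  "lor3 x y = - fst x * fst y + fst (snd x) * fst (snd y) + snd (snd x) * snd (snd y)"

definition lor4 :: "L4 \<Rightarrow> L4 \<Rightarrow> real" where
  "lor4 x y = lor3 (fst x) (fst y) + snd x * snd y"

definition H2 :: "L3 set" where
  "H2 = {x. lor3 x x = -1 \<and> fst x > 0}"

definition riemann_surface :: "('a::t2_space set \<times> ('a \<Rightarrow> complex)) set \<Rightarrow> bool" where
  "riemann_surface A \<longleftrightarrow>
     (\<forall>(U,\<phi>)\<in>A. open U \<and> open (\<phi> ` U) \<and> inj_on \<phi> U \<and> continuous_on U \<phi>
                 \<and> continuous_on (\<phi> ` U) (the_inv_into U \<phi>)) \<and>
     (\<Union>(U,\<phi>)\<in>A. U) = UNIV \<and>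
     (\<forall>(U,\<phi>)\<in>A. \<forall>(V,\<kappa>)\<in>A. (\<kappa> \<circ> the_inv_into U \<phi>) holomorphic_on (\<phi> ` (U \<inter> V)))"

definition loc :: "('a \<Rightarrow> 'b) \<Rightarrow> 'a set \<Rightarrow> ('a \<Rightarrow> complex) \<Rightarrow> complex \<Rightarrow> 'b" where
  "loc F U \<phi> = F \<circ> the_inv_into U \<phi>"

definition pd :: "complex \<Rightarrow> (complex \<Rightarrow> 'b::real_normed_vector) \<Rightarrow> complex \<Rightarrow> 'b" where
  "pd d f z = frechet_derivative f (at z) d"

text \<open>z = u + i v; pd 1 is the u-derivative, pd i the v-derivative.\<close>

fun iter_pd :: "complex list \<Rightarrow> (complex \<Rightarrow> 'b::real_normed_vector) \<Rightarrow> complex \<Rightarrow> 'b" where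
  "iter_pd [] f = f"
| "iter_pd (d # ds) f = pd d (iter_pd ds f)"

definition smooth_on :: "complex set \<Rightarrow> (complex \<Rightarrow> 'b::real_normed_vector) \<Rightarrow> bool" where
  "smooth_on \<Omega> f \<longleftrightarrow> (\<forall>ds. iter_pd ds f differentiable_on \<Omega>)"

definition lap :: "(complex \<Rightarrow> 'b::real_normed_vector) \<Rightarrow> complex \<Rightarrow> 'b" where
  "lap f z = pd 1 (pd 1 f) z + pd \<i> (pd \<i> f) z"

definition conformal_immersion_H2R ::
    "('a::t2_space set \<times> ('a \<Rightarrow> complex)) set \<Rightarrow> ('a \<Rightarrow> L4) \<Rightarrow> bool" where
  "conformal_immersion_H2R A \<psi> \<longleftrightarrow>
     (\<forall>p. fst (\<psi> p) \<in> H2) \<and>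
     (\<forall>(U,\<phi>)\<in>A. smooth_on (\<phi> ` U) (loc \<psi> U \<phi>) \<and>
        (\<forall>z\<in>\<phi> ` U. let f = loc \<psi> U \<phi> in
            lor4 (pd 1 f z) (pd 1 f z) = lor4 (pd \<i> f z) (pd \<i> f z)
          \<and> lor4 (pd 1 f z) (pd \<i> f z) = 0
          \<and> lor4 (pd 1 f z) (pd 1 f z) > 0))"

text \<open>eta is a unit normal of the local representation f at z, tangent to H2 x R
  (orthogonal to the normal (N,0) of H2 x R in L4).\<close>
definition unit_normal :: "(complex \<Rightarrow> L4) \<Rightarrow> complex \<Rightarrow> L4 \<Rightarrow> bool" where
  "unit_normal f z \<eta> \<longleftrightarrow>
     lor4 \<eta> (pd 1 f z) = 0 \<and> lor4 \<eta> (pd \<i> f z) = 0 \<and>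
     lor4 \<eta> (fst (f z), 0) = 0 \<and> lor4 \<eta> \<eta> = 1"

text \<open>Regular vertical projection: the angle function u (last coordinate of eta) never vanishes.\<close>
definition regular_vertical_projection ::
    "('a::t2_space set \<times> ('a \<Rightarrow> complex)) set \<Rightarrow> ('a \<Rightarrow> L4) \<Rightarrow> bool" where
  "regular_vertical_projection A \<psi> \<longleftrightarrow>
     (\<forall>(U,\<phi>)\<in>A. \<forall>z\<in>\<phi> ` U. \<forall>\<eta>. unit_normal (loc \<psi> U \<phi>) z \<eta> \<longrightarrow> snd \<eta> \<noteq> 0)"

definition mean_curv :: "(complex \<Rightarrow> L4) \<Rightarrow> complex \<Rightarrow> L4 \<Rightarrow> real" where
  "mean_curv f z \<eta> = lor4 (lap f z) \<eta> / (2 * lor4 (pd 1 f z) (pd 1 f z))"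

text \<open>Constant mean curvature H0 with respect to the canonical orientation (u > 0).\<close>
definition cmc_canonical ::
    "('a::t2_space set \<times> ('a \<Rightarrow> complex)) set \<Rightarrow> ('a \<Rightarrow> L4) \<Rightarrow> real \<Rightarrow> bool" where
  "cmc_canonical A \<psi> H0 \<longleftrightarrow>
     (\<forall>(U,\<phi>)\<in>A. \<forall>z\<in>\<phi> ` U. \<forall>\<eta>. unit_normal (loc \<psi> U \<phi>) z \<eta> \<and> snd \<eta> > 0
         \<longrightarrow> mean_curv (loc \<psi> U \<phi>) z \<eta> = H0)"

definition hyperbolic_gauss_map ::
    "('a::t2_space set \<times> ('a \<Rightarrow> complex)) set \<Rightarrow> ('a \<Rightarrow> L4) \<Rightarrow> ('a \<Rightarrow> L3) \<Rightarrow> bool" where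
  "hyperbolic_gauss_map A \<psi> G \<longleftrightarrow>
     (\<forall>(U,\<phi>)\<in>A. \<forall>p\<in>U. \<forall>\<eta>. unit_normal (loc \<psi> U \<phi>) (\<phi> p) \<eta> \<and> snd \<eta> > 0
         \<longrightarrow> (G p, 1) = (1 / snd \<eta>) *\<^sub>R (\<eta> + (fst (\<psi> p), 0)))"

text \<open>G : Sigma -> H2 (smooth) is conformal: <G_z,G_z> = 0, i.e. <G_u,G_u> = <G_v,G_v>, <G_u,G_v> = 0.\<close>
definition conformal_H2 ::
    "('a::t2_space set \<times> ('a \<Rightarrow> complex)) set \<Rightarrow> ('a \<Rightarrow> L3) \<Rightarrow> bool" where
  "conformal_H2 A G \<longleftrightarrow>
     (\<forall>p. G p \<in> H2) \<and>
     (\<forall>(U,\<phi>)\<in>A. smooth_on (\<phi> ` U) (loc G U \<phi>) \<and>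
        (\<forall>z\<in>\<phi> ` U. let g = loc G U \<phi> in
            lor3 (pd 1 g z) (pd 1 g z) = lor3 (pd \<i> g z) (pd \<i> g z)
          \<and> lor3 (pd 1 g z) (pd \<i> g z) = 0))"

definition conformal_immersion_H2 ::
    "('a::t2_space set \<times> ('a \<Rightarrow> complex)) set \<Rightarrow> ('a \<Rightarrow> L3) \<Rightarrow> bool" where
  "conformal_immersion_H2 A G \<longleftrightarrow>
     conformal_H2 A G \<and>
     (\<forall>(U,\<phi>)\<in>A. \<forall>z\<in>\<phi> ` U. lor3 (pd 1 (loc G U \<phi>) z) (pd 1 (loc G U \<phi>) z) > 0)"

end

theory Submission
  imports Defs
begin

text \<open>
  Write \<open>\<psi> = (N, h)\<close> and let \<open>\<eta>\<close> be the canonical unit normal, \<open>u = snd \<eta> > 0\<close>; the Gauss map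
  condition says \<open>\<eta> = u (G, 1) - (N, 0)\<close>.

  For (a) consider the Gauss invariant \<open>q = \<psi> + 2 \<langle>N, G\<rangle> (G, 1)\<close>. At each point expand everything
  in the orthogonal frame \<open>(\<psi>\<^sub>u, \<psi>\<^sub>v, \<eta>, (N, 0))\<close>: conformality of \<open>G\<close>, \<open>H = 1/2\<close> and the symmetry
  of \<open>\<psi>\<^sub>u\<^sub>v\<close> force \<open>\<langle>(G\<^sub>u, 0), \<psi>\<^sub>u\<rangle> = \<lambda> u / 2\<close>, \<open>\<langle>(G\<^sub>u, 0), \<psi>\<^sub>v\<rangle> = 0\<close> and \<open>h\<^sub>u = 2 \<langle>G\<^sub>u, N\<rangle>\<close>
  (and likewise for \<open>v\<close>), which make \<open>dq\<close> orthogonal to the whole frame. So \<open>q\<close> is locally constant,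
  hence equal to some \<open>(-a, c)\<close> on the connected surface. Then \<open>a = -N - 2 \<langle>N, G\<rangle> G\<close> is the
  geodesic reflection of \<open>N\<close> in \<open>G\<close>, so \<open>a \<in> H2\<close> and \<open>\<langle>a, G\<rangle> = \<langle>N, G\<rangle>\<close>, which is the formula.

  For (b) the horizontal part of \<open>\<psi> = (-a, 0) - 2 \<langle>a, G\<rangle> (G, 1)\<close> is the reflection of \<open>a\<close> in \<open>G\<close>,
  the derivatives of \<open>\<psi>\<close> are explicit, \<open>\<eta> = -(G, 1) / \<langle>a, G\<rangle> - (N, 0)\<close> is the only canonical unit
  normal, and the mean curvature equation reduces to Parseval's identity for \<open>a\<close> in the orthogonal
  frame \<open>((G, 0), (G\<^sub>u, 0), (G\<^sub>v, 0), (0, 1))\<close>.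
\<close>

lemma lor3_commute: "lor3 x y = lor3 y x"
  by (simp add: lor3_def algebra_simps)

lemma lor4_commute: "lor4 x y = lor4 y x"
  by (simp add: lor4_def lor3_commute algebra_simps)

lemma lor3_add_left [simp]: "lor3 (x + y) z = lor3 x z + lor3 y z"
  and lor3_add_right [simp]: "lor3 z (x + y) = lor3 z x + lor3 z y"
  and lor3_diff_left [simp]: "lor3 (x - y) z = lor3 x z - lor3 y z"
  and lor3_diff_right [simp]: "lor3 z (x - y) = lor3 z x - lor3 z y"
  and lor3_minus_left [simp]: "lor3 (- x) z = - lor3 x z"
  and lor3_minus_right [simp]: "lor3 z (- x) = - lor3 z x"
  and lor3_scaleR_left [simp]: "lor3 (c *\<^sub>R x) z = c * lor3 x z"
  and lor3_scaleR_right [simp]: "lor3 z (c *\<^sub>R x) = c * lor3 z x"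
  and lor3_zero_left [simp]: "lor3 0 z = 0"
  and lor3_zero_right [simp]: "lor3 z 0 = 0"
  by (simp_all add: lor3_def algebra_simps)

lemma lor4_Pair [simp]: "lor4 (a, b) (c, d) = lor3 a c + b * d"
  by (simp add: lor4_def)

lemma lor4_vertical: "lor4 (0, 1) x = snd x"
  by (simp add: lor4_def)

lemma lor4_add_left [simp]: "lor4 (x + y) z = lor4 x z + lor4 y z"
  and lor4_add_right [simp]: "lor4 z (x + y) = lor4 z x + lor4 z y"
  and lor4_diff_left [simp]: "lor4 (x - y) z = lor4 x z - lor4 y z"
  and lor4_diff_right [simp]: "lor4 z (x - y) = lor4 z x - lor4 z y"
  and lor4_minus_left [simp]: "lor4 (- x) z = - lor4 x z"
  and lor4_minus_right [simp]: "lor4 z (- x) = - lor4 z x"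
  and lor4_scaleR_left [simp]: "lor4 (c *\<^sub>R x) z = c * lor4 x z"
  and lor4_scaleR_right [simp]: "lor4 z (c *\<^sub>R x) = c * lor4 z x"
  and lor4_zero_left [simp]: "lor4 0 z = 0"
  and lor4_zero_right [simp]: "lor4 z 0 = 0"
  by (simp_all add: lor4_def algebra_simps)

lemma bounded_bilinear_lor3: "bounded_bilinear lor3"
  by (simp add: bilinear_conv_bounded_bilinear[symmetric] bilinear_def linear_iff)

lemma bounded_bilinear_lor4: "bounded_bilinear lor4"
  by (simp add: bilinear_conv_bounded_bilinear[symmetric] bilinear_def linear_iff)

section \<open>Orthogonal bases of L4\<close>

definition lor4_orthogonal_basis :: "L4 \<Rightarrow> L4 \<Rightarrow> L4 \<Rightarrow> L4 \<Rightarrow> bool" where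
  "lor4_orthogonal_basis b1 b2 b3 b4 \<longleftrightarrow>
     lor4 b1 b2 = 0 \<and> lor4 b1 b3 = 0 \<and> lor4 b1 b4 = 0 \<and>
     lor4 b2 b3 = 0 \<and> lor4 b2 b4 = 0 \<and> lor4 b3 b4 = 0 \<and>
     lor4 b1 b1 \<noteq> 0 \<and> lor4 b2 b2 \<noteq> 0 \<and> lor4 b3 b3 \<noteq> 0 \<and> lor4 b4 b4 \<noteq> 0"

lemma lor4_orthogonal_basis_expansion:
  assumes "lor4_orthogonal_basis b1 b2 b3 b4"
  shows "x = (lor4 x b1 / lor4 b1 b1) *\<^sub>R b1 + (lor4 x b2 / lor4 b2 b2) *\<^sub>R b2
           + (lor4 x b3 / lor4 b3 b3) *\<^sub>R b3 + (lor4 x b4 / lor4 b4 b4) *\<^sub>R b4"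
proof -
  have orth: "lor4 bi bj = 0" if "bi \<in> {b1, b2, b3, b4}" "bj \<in> {b1, b2, b3, b4}" "bi \<noteq> bj" for bi bj
    using assms that unfolding lor4_orthogonal_basis_def by (auto; metis lor4_commute)
  have distinct: "distinct [b1, b2, b3, b4]"
    using assms unfolding lor4_orthogonal_basis_def by auto
  define B where "B = {b1, b2, b3, b4}"
  have sum_B: "(\<Sum>v\<in>B. F v) = F b1 + F b2 + F b3 + F b4" for F :: "L4 \<Rightarrow> 'z::comm_monoid_add"
    using distinct by (simp add: B_def add.assoc)
  have coeff: "lor4 (\<Sum>v\<in>B. c v *\<^sub>R v) b = c b * lor4 b b" if "b \<in> B" for c b
  proof -
    have "lor4 (\<Sum>v\<in>B. c v *\<^sub>R v) b = (\<Sum>v\<in>B. c v * lor4 v b)"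
      by (induction B rule: infinite_finite_induct) simp_all
    also have "\<dots> = (\<Sum>v\<in>{b}. c v * lor4 v b)"
      using that orth by (intro sum.mono_neutral_right) (auto simp: B_def)
    finally show ?thesis by simp
  qed
  have "independent B"
    unfolding independent_explicit
  proof (intro conjI allI impI ballI)
    show "finite B" by (simp add: B_def)
    fix c v assume "(\<Sum>v\<in>B. c v *\<^sub>R v) = 0" and "v \<in> B"
    then show "c v = 0"
      using coeff[of v c] assms by (auto simp: B_def lor4_orthogonal_basis_def)
  qed
  moreover have "card B = DIM(L4)"
    using distinct by (simp add: B_def)
  ultimately have "span B = UNIV"
    using card_eq_dim[of B UNIV] by (auto simp: B_def)
  then obtain c where c: "x = (\<Sum>v\<in>B. c v *\<^sub>R v)"
    using span_finite[of B] by (auto simp: B_def)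
  have "c b = lor4 x b / lor4 b b" if "b \<in> B" for b
    using coeff[OF that, of c] that assms by (auto simp: c B_def lor4_orthogonal_basis_def)
  with c have "x = (\<Sum>v\<in>B. (lor4 x v / lor4 v v) *\<^sub>R v)"
    by simp
  then show ?thesis
    by (simp only: sum_B)
qed

lemma lor4_orthogonal_basis_inner:
  assumes "lor4_orthogonal_basis b1 b2 b3 b4"
  shows "lor4 x y = lor4 x b1 * lor4 y b1 / lor4 b1 b1 + lor4 x b2 * lor4 y b2 / lor4 b2 b2
           + lor4 x b3 * lor4 y b3 / lor4 b3 b3 + lor4 x b4 * lor4 y b4 / lor4 b4 b4"
  by (subst lor4_orthogonal_basis_expansion[OF assms, of x]) (simp add: lor4_commute[of _ y])

lemma lor4_orthogonal_basis_eq_0: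
  assumes "lor4_orthogonal_basis b1 b2 b3 b4"
    and "lor4 x b1 = 0" "lor4 x b2 = 0" "lor4 x b3 = 0" "lor4 x b4 = 0"
  shows "x = 0"
  using lor4_orthogonal_basis_expansion[OF assms(1), of x] assms(2-5) by simp

lemma lor4_unit_orthogonal_unique:
  assumes "lor4_orthogonal_basis b1 b2 e b4" "lor4 e e = 1"
    and "lor4 \<eta> b1 = 0" "lor4 \<eta> b2 = 0" "lor4 \<eta> b4 = 0" "lor4 \<eta> \<eta> = 1"
  shows "\<eta> = e \<or> \<eta> = - e"
proof -
  have \<eta>: "\<eta> = lor4 \<eta> e *\<^sub>R e"
    using lor4_orthogonal_basis_expansion[OF assms(1), of \<eta>] assms(2-5) by simp
  have "lor4 \<eta> e * lor4 \<eta> e = 1"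
    using assms(2,6) by (subst (asm) (1 2) \<eta>) simp
  then have "lor4 \<eta> e = 1 \<or> lor4 \<eta> e = -1"
    by (metis mult_cancel_left1 square_eq_1_iff)
  then show ?thesis
    using \<eta> by auto
qed

lemma lor4_exists_orthogonal:
  assumes "lor4 b1 b2 = 0" "lor4 b1 b3 = 0" "lor4 b2 b3 = 0"
    and "lor4 b1 b1 \<noteq> 0" "lor4 b2 b2 \<noteq> 0" "lor4 b3 b3 \<noteq> 0"
  obtains w where "w \<noteq> 0" "lor4 w b1 = 0" "lor4 w b2 = 0" "lor4 w b3 = 0"
proof -
  define P where "P x = x - (lor4 x b1 / lor4 b1 b1) *\<^sub>R b1 - (lor4 x b2 / lor4 b2 b2) *\<^sub>R b2
           - (lor4 x b3 / lor4 b3 b3) *\<^sub>R b3" for x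
  have P_orth: "lor4 (P x) b1 = 0" "lor4 (P x) b2 = 0" "lor4 (P x) b3 = 0" for x
    using assms lor4_commute[of b2 b1] lor4_commute[of b3 b1] lor4_commute[of b3 b2]
    by (simp_all add: P_def)
  show ?thesis
  proof (cases "\<exists>x. P x \<noteq> 0")
    case True
    then show ?thesis
      using that P_orth by blast
  next
    case False
    have "x \<in> span {b1, b2, b3}" for x
    proof -
      have "P x = 0"
        using False by blast
      then have "x = (lor4 x b1 / lor4 b1 b1) *\<^sub>R b1 + (lor4 x b2 / lor4 b2 b2) *\<^sub>R b2
             + (lor4 x b3 / lor4 b3 b3) *\<^sub>R b3"
        by (simp add: P_def algebra_simps)
      also have "\<dots> \<in> span {b1, b2, b3}"
        by (intro span_add span_scale span_base) auto
      finally show ?thesis .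
    qed
    then have "DIM(L4) \<le> card {b1, b2, b3}"
      by (metis dim_UNIV dim_le_card finite.emptyI finite.insertI subsetI)
    also have "\<dots> \<le> 3"
      by (simp add: card_insert_if)
    finally show ?thesis
      by simp
  qed
qed

lemma lor3_H2_le:
  assumes "x \<in> H2" "y \<in> H2"
  shows "lor3 x y \<le> -1"
proof -
  obtain x0 x1 x2 where x: "x = (x0, x1, x2)" by (cases x) auto
  obtain y0 y1 y2 where y: "y = (y0, y1, y2)" by (cases y) auto
  have hx: "x0\<^sup>2 = 1 + x1\<^sup>2 + x2\<^sup>2" "x0 > 0" and hy: "y0\<^sup>2 = 1 + y1\<^sup>2 + y2\<^sup>2" "y0 > 0"
    using assms by (auto simp: H2_def lor3_def x y power2_eq_square)
  have "x0 \<ge> 1" "y0 \<ge> 1"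
    using hx hy by (smt (verit) one_le_power power2_eq_square sum_power2_ge_zero
        mult_le_cancel_left1 abs_le_square_iff)+
  define p where "p = x1 * y1 + x2 * y2"
  have "p\<^sup>2 \<le> (x1\<^sup>2 + x2\<^sup>2) * (y1\<^sup>2 + y2\<^sup>2)"
    using zero_le_power2[of "x1 * y2 - x2 * y1"] by (simp add: p_def power2_eq_square algebra_simps)
  also have "\<dots> = (x0\<^sup>2 - 1) * (y0\<^sup>2 - 1)"
    using hx hy by simp
  also have "\<dots> = (x0 * y0 - 1)\<^sup>2 - (x0 - y0)\<^sup>2"
    by (simp add: power2_eq_square algebra_simps)
  finally have "p\<^sup>2 \<le> (x0 * y0 - 1)\<^sup>2"
    by (smt (verit) zero_le_power2)
  moreover have "x0 * y0 - 1 \<ge> 0"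
    using \<open>x0 \<ge> 1\<close> \<open>y0 \<ge> 1\<close> by (smt (verit) mult_ge1_I)
  ultimately have "p \<le> x0 * y0 - 1"
    using abs_le_square_iff power2_le_imp_le by (smt (verit))
  then show ?thesis
    by (simp add: lor3_def x y p_def)
qed

lemma H2_if_lor3_neg:
  assumes "lor3 x x = -1" "y \<in> H2" "lor3 x y < 0"
  shows "x \<in> H2"
proof -
  have "fst x \<noteq> 0"
  proof
    assume "fst x = 0"
    then have "lor3 x x = (fst (snd x))\<^sup>2 + (snd (snd x))\<^sup>2"
      by (simp add: lor3_def power2_eq_square)
    then show False
      using assms(1) by (smt (verit) zero_le_power2)
  qed
  moreover have "\<not> - x \<in> H2"
    using lor3_H2_le[of "- x" y] assms(2,3) by auto
  ultimately show ?thesis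
    using assms(1) by (auto simp: H2_def)
qed

text \<open>The geodesic symmetry of H2 about the point y.\<close>

definition hyp_reflect :: "L3 \<Rightarrow> L3 \<Rightarrow> L3" where
  "hyp_reflect y x = - x - (2 * lor3 x y) *\<^sub>R y"

lemma lor3_hyp_reflect:
  assumes "y \<in> H2"
  shows "lor3 (hyp_reflect y x) y = lor3 x y"
    and "lor3 (hyp_reflect y x) (hyp_reflect y x) = lor3 x x"
  using assms lor3_commute[of x y] by (auto simp: hyp_reflect_def H2_def algebra_simps)

lemma hyp_reflect_H2:
  assumes "y \<in> H2" "x \<in> H2"
  shows "hyp_reflect y x \<in> H2"
proof (rule H2_if_lor3_neg)
  show "lor3 (hyp_reflect y x) (hyp_reflect y x) = -1" "lor3 (hyp_reflect y x) y < 0"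
    using assms lor3_hyp_reflect[OF assms(1)] lor3_H2_le[of x y] by (auto simp: H2_def)
qed (fact assms(1))

lemma lor4_pos_if_orthogonal_H2:
  assumes "N \<in> H2" "lor4 w (N, 0) = 0" "w \<noteq> 0"
  shows "lor4 w w > 0"
proof -
  obtain N0 N1 N2 where N: "N = (N0, N1, N2)" by (cases N) auto
  obtain w0 w1 w2 w3 where w: "w = ((w0, w1, w2), w3)" by (cases w) auto
  have hN: "N0\<^sup>2 = 1 + N1\<^sup>2 + N2\<^sup>2" "N0 > 0"
    using assms(1) by (auto simp: H2_def lor3_def N power2_eq_square)
  have orth: "w0 * N0 = w1 * N1 + w2 * N2"
    using assms(2) by (simp add: w N lor3_def)
  have "(w0 * N0)\<^sup>2 \<le> (w1\<^sup>2 + w2\<^sup>2) * (N1\<^sup>2 + N2\<^sup>2)"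
    unfolding orth using zero_le_power2[of "w1 * N2 - w2 * N1"]
    by (simp add: power2_eq_square algebra_simps)
  then have "w0\<^sup>2 * N0\<^sup>2 + (w1\<^sup>2 + w2\<^sup>2) \<le> (w1\<^sup>2 + w2\<^sup>2) * N0\<^sup>2"
    using hN by (simp add: power_mult_distrib algebra_simps)
  show ?thesis
  proof (cases "w1\<^sup>2 + w2\<^sup>2 = 0")
    case True
    then have "w1 = 0" "w2 = 0" "w0 = 0"
      using orth hN by (simp_all add: sum_power2_eq_zero_iff)
    then have "w3 \<noteq> 0"
      using assms(3) by (auto simp: w zero_prod_def)
    then show ?thesis
      using \<open>w0 = 0\<close> \<open>w1 = 0\<close> \<open>w2 = 0\<close> by (simp add: w lor3_def) (metis not_real_square_gt_zero)
  next
    case False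
    then have "w0\<^sup>2 * N0\<^sup>2 < (w1\<^sup>2 + w2\<^sup>2) * N0\<^sup>2"
      using \<open>w0\<^sup>2 * N0\<^sup>2 + (w1\<^sup>2 + w2\<^sup>2) \<le> _\<close> by (smt (verit) zero_le_power2)
    then have "w0\<^sup>2 < w1\<^sup>2 + w2\<^sup>2"
      using hN by (simp add: mult_less_cancel_right)
    then show ?thesis
      by (simp add: w lor3_def power2_eq_square) (smt (verit) zero_le_square)
  qed
qed

lemma has_derivative_pd: "f differentiable (at z) \<Longrightarrow> (f has_derivative (\<lambda>d. pd d f z)) (at z)"
  unfolding pd_def by (metis frechet_derivative_works eta_contract_eq)

lemma pd_eqI: "(f has_derivative F) (at z) \<Longrightarrow> pd d f z = F d"
  unfolding pd_def by (metis frechet_derivative_at)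

lemma pd_cong:
  assumes "open \<Omega>" "z \<in> \<Omega>" "\<And>w. w \<in> \<Omega> \<Longrightarrow> f w = g w"
  shows "pd d f z = pd d g z"
proof -
  have "(f has_derivative D) (at z) \<longleftrightarrow> (g has_derivative D) (at z)" for D
    using has_derivative_transform_within_open[of f D z UNIV \<Omega> g]
      has_derivative_transform_within_open[of g D z UNIV \<Omega> f] assms by auto
  then show ?thesis
    by (simp add: pd_def frechet_derivative_def)
qed

lemma pd_eq_0_if_constant_on:
  assumes "open \<Omega>" "z \<in> \<Omega>" "\<And>w. w \<in> \<Omega> \<Longrightarrow> f w = c"
  shows "pd d f z = 0"
  using pd_cong[OF assms(1,2), of f "\<lambda>_. c"] assms(3) by (simp add: pd_def)

lemma pd_bilinear:
  assumes "bounded_bilinear b" "f differentiable (at z)" "g differentiable (at z)"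
  shows "pd d (\<lambda>w. b (f w) (g w)) z = b (pd d f z) (g z) + b (f z) (pd d g z)"
  using bounded_bilinear.FDERIV[OF assms(1) has_derivative_pd[OF assms(2)] has_derivative_pd[OF assms(3)]]
  by (simp add: pd_eqI add.commute)

lemma pd_linear:
  assumes "bounded_linear L" "f differentiable (at z)"
  shows "pd d (\<lambda>w. L (f w)) z = L (pd d f z)"
  using bounded_linear.has_derivative[OF assms(1) has_derivative_pd[OF assms(2)]] by (rule pd_eqI)

lemma pd_add:
  assumes "f differentiable (at z)" "g differentiable (at z)"
  shows "pd d (\<lambda>w. f w + g w) z = pd d f z + pd d g z"
  using has_derivative_add[OF has_derivative_pd[OF assms(1)] has_derivative_pd[OF assms(2)]]
  by (rule pd_eqI)

lemma pd_Pair_const: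
  assumes "g differentiable (at z)"
  shows "pd d (\<lambda>w. (g w, c)) z = (pd d g z, 0)"
  using has_derivative_Pair[OF has_derivative_pd[OF assms] has_derivative_const[of c]] by (rule pd_eqI)

lemma differentiable_bilinear:
  fixes f :: "complex \<Rightarrow> 'a::real_normed_vector" and g :: "complex \<Rightarrow> 'b::real_normed_vector"
  assumes "bounded_bilinear b" "f differentiable (at z)" "g differentiable (at z)"
  shows "(\<lambda>w. b (f w) (g w)) differentiable (at z)"
  using bounded_bilinear.FDERIV[OF assms(1) has_derivative_pd[OF assms(2)] has_derivative_pd[OF assms(3)]]
  unfolding differentiable_def by blast

lemma differentiable_linear:
  fixes f :: "complex \<Rightarrow> 'a::real_normed_vector"
  assumes "bounded_linear L" "f differentiable (at z)"
  shows "(\<lambda>w. L (f w)) differentiable (at z)"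
  using bounded_linear.has_derivative[OF assms(1) has_derivative_pd[OF assms(2)]]
  unfolding differentiable_def by blast

lemma has_derivative_0_if_coordinate_pds_0:
  assumes "f differentiable (at z)" "pd 1 f z = 0" "pd \<i> f z = 0"
  shows "(f has_derivative (\<lambda>d. 0)) (at z)"
proof -
  have lin: "linear (\<lambda>d. pd d f z)"
    using has_derivative_pd[OF assms(1)] has_derivative_linear by blast
  have "pd d f z = Re d *\<^sub>R pd 1 f z + Im d *\<^sub>R pd \<i> f z" for d
  proof -
    have "d = Re d *\<^sub>R 1 + Im d *\<^sub>R \<i>"
      by (simp add: complex_eq_iff)
    then show ?thesis
      using linear_add[OF lin] linear_cmul[OF lin] by metis
  qed
  then show ?thesis
    using has_derivative_pd[OF assms(1)] assms(2,3) by simp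
qed

lemma differentiable_on_cong_open:
  assumes "f differentiable_on \<Omega>" "open \<Omega>" "\<And>w. w \<in> \<Omega> \<Longrightarrow> f w = g w"
  shows "g differentiable_on \<Omega>"
  using assms has_derivative_transform_within_open[of f _ _ UNIV \<Omega> g]
  unfolding differentiable_on_eq_differentiable_at[OF assms(2)] differentiable_def by blast

lemma iter_pd_cong:
  assumes "open \<Omega>" "\<And>w. w \<in> \<Omega> \<Longrightarrow> f w = g w" "z \<in> \<Omega>"
  shows "iter_pd ds f z = iter_pd ds g z"
  using assms(3)
proof (induction ds arbitrary: z)
  case (Cons d ds)
  then show ?case
    using pd_cong[OF assms(1) Cons.prems, of "iter_pd ds f" "iter_pd ds g" d] by simp
qed (simp add: assms(2))

lemma iter_pd_append: "iter_pd (ds @ [d]) f = iter_pd ds (pd d f)"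
  by (induction ds) auto

lemma smooth_on_differentiable_at:
  "smooth_on \<Omega> f \<Longrightarrow> open \<Omega> \<Longrightarrow> z \<in> \<Omega> \<Longrightarrow> f differentiable (at z)"
  using differentiable_on_eq_differentiable_at unfolding smooth_on_def by (metis iter_pd.simps(1))

lemma smooth_on_pd: "smooth_on \<Omega> f \<Longrightarrow> smooth_on \<Omega> (pd d f)"
  unfolding smooth_on_def by (metis iter_pd_append)

lemma smooth_on_const: "smooth_on \<Omega> (\<lambda>w. c)"
proof -
  have "\<exists>c'. iter_pd ds (\<lambda>w. c) = (\<lambda>w. c')" for ds
    by (induction ds) (auto simp: pd_def[abs_def])
  then show ?thesis
    unfolding smooth_on_def by (metis differentiable_const differentiable_on_def)
qed

lemma iter_pd_linear:
  assumes "open \<Omega>" "bounded_linear L" "smooth_on \<Omega> f" "z \<in> \<Omega>"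
  shows "iter_pd ds (\<lambda>w. L (f w)) z = L (iter_pd ds f z)"
  using assms(4)
proof (induction ds arbitrary: z)
  case (Cons d ds)
  have "pd d (iter_pd ds (\<lambda>w. L (f w))) z = pd d (\<lambda>w. L (iter_pd ds f w)) z"
    using Cons by (intro pd_cong[OF assms(1)])
  also have "\<dots> = L (pd d (iter_pd ds f) z)"
    using assms Cons.prems
    by (intro pd_linear) (auto simp: smooth_on_def differentiable_on_eq_differentiable_at)
  finally show ?case
    by simp
qed simp

lemma smooth_on_linear:
  assumes "open \<Omega>" "bounded_linear L" "smooth_on \<Omega> f"
  shows "smooth_on \<Omega> (\<lambda>w. L (f w))"
  unfolding smooth_on_def
proof
  fix ds
  have "(\<lambda>w. L (iter_pd ds f w)) differentiable_on \<Omega>"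
    using assms(2,3) differentiable_on_compose[of "iter_pd ds f" \<Omega> L]
    unfolding smooth_on_def by (simp add: bounded_linear_imp_differentiable_on)
  then show "iter_pd ds (\<lambda>w. L (f w)) differentiable_on \<Omega>"
    by (rule differentiable_on_cong_open[OF _ assms(1)]) (simp add: iter_pd_linear[OF assms(1-3)])
qed

definition differentiable_upto :: "nat \<Rightarrow> complex set \<Rightarrow> (complex \<Rightarrow> 'b::real_normed_vector) \<Rightarrow> bool" where
  "differentiable_upto n \<Omega> f \<longleftrightarrow> (\<forall>ds. length ds \<le> n \<longrightarrow> iter_pd ds f differentiable_on \<Omega>)"

lemma smooth_on_iff_differentiable_upto: "smooth_on \<Omega> f \<longleftrightarrow> (\<forall>n. differentiable_upto n \<Omega> f)"
  by (auto simp: smooth_on_def differentiable_upto_def)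

lemma iter_pd_add:
  assumes "open \<Omega>" "differentiable_upto n \<Omega> f" "differentiable_upto n \<Omega> g"
    and "length ds \<le> n" "z \<in> \<Omega>"
  shows "iter_pd ds (\<lambda>w. f w + g w) z = iter_pd ds f z + iter_pd ds g z"
  using assms(4,5)
proof (induction ds arbitrary: z)
  case (Cons d ds)
  have "pd d (iter_pd ds (\<lambda>w. f w + g w)) z = pd d (\<lambda>w. iter_pd ds f w + iter_pd ds g w) z"
    using Cons by (intro pd_cong[OF assms(1)]) auto
  also have "\<dots> = pd d (iter_pd ds f) z + pd d (iter_pd ds g) z"
    using assms(2,3) Cons.prems
    by (intro pd_add) (auto simp: differentiable_upto_def differentiable_on_eq_differentiable_at[OF assms(1)])
  finally show ?case
    by simp
qed simp

lemma differentiable_upto_add: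
  assumes "open \<Omega>" "differentiable_upto n \<Omega> f" "differentiable_upto n \<Omega> g"
  shows "differentiable_upto n \<Omega> (\<lambda>w. f w + g w)"
  unfolding differentiable_upto_def
proof (intro allI impI)
  fix ds :: "complex list" assume "length ds \<le> n"
  with assms have "(\<lambda>w. iter_pd ds f w + iter_pd ds g w) differentiable_on \<Omega>"
    by (simp add: differentiable_upto_def)
  then show "iter_pd ds (\<lambda>w. f w + g w) differentiable_on \<Omega>"
    by (rule differentiable_on_cong_open[OF _ assms(1)])
      (simp add: iter_pd_add[OF assms \<open>length ds \<le> n\<close>])
qed

lemma smooth_on_add:
  "open \<Omega> \<Longrightarrow> smooth_on \<Omega> f \<Longrightarrow> smooth_on \<Omega> g \<Longrightarrow> smooth_on \<Omega> (\<lambda>w. f w + g w)"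
  by (simp add: smooth_on_iff_differentiable_upto differentiable_upto_add)

lemma differentiable_upto_bilinear:
  fixes f :: "complex \<Rightarrow> 'a::real_normed_vector" and g :: "complex \<Rightarrow> 'b::real_normed_vector"
    and b :: "'a \<Rightarrow> 'b \<Rightarrow> 'c::real_normed_vector"
  assumes "open \<Omega>" "bounded_bilinear b" "smooth_on \<Omega> f" "smooth_on \<Omega> g"
  shows "differentiable_upto n \<Omega> (\<lambda>w. b (f w) (g w))"
  using assms(3,4)
proof (induction n arbitrary: f g)
  case 0
  have "(\<lambda>w. b (f w) (g w)) differentiable (at z)" if "z \<in> \<Omega>" for z
    using 0 that by (intro differentiable_bilinear[OF assms(2)] smooth_on_differentiable_at[OF _ assms(1)])
  then show ?case
    by (simp add: differentiable_upto_def differentiable_on_eq_differentiable_at[OF assms(1)])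
next
  case (Suc n)
  show ?case
    unfolding differentiable_upto_def
  proof (intro allI impI)
    fix ds :: "complex list" assume len: "length ds \<le> Suc n"
    show "iter_pd ds (\<lambda>w. b (f w) (g w)) differentiable_on \<Omega>"
    proof (cases ds rule: rev_exhaust)
      case Nil
      then show ?thesis
        using Suc.IH[OF Suc.prems] unfolding differentiable_upto_def
        by (metis iter_pd.simps(1) le0 list.size(3))
    next
      case (snoc ds' d)
      have "differentiable_upto n \<Omega> (\<lambda>w. b (pd d f w) (g w) + b (f w) (pd d g w))"
        using Suc.prems by (intro differentiable_upto_add assms(1) Suc.IH smooth_on_pd)
      then have "iter_pd ds' (\<lambda>w. b (pd d f w) (g w) + b (f w) (pd d g w)) differentiable_on \<Omega>"
        using len snoc by (simp add: differentiable_upto_def)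
      moreover have "iter_pd ds' (\<lambda>w. b (pd d f w) (g w) + b (f w) (pd d g w)) w
          = iter_pd ds' (pd d (\<lambda>w. b (f w) (g w))) w" if "w \<in> \<Omega>" for w
      proof (rule iter_pd_cong[OF assms(1) _ that])
        show "b (pd d f v) (g v) + b (f v) (pd d g v) = pd d (\<lambda>w. b (f w) (g w)) v"
          if "v \<in> \<Omega>" for v
          using Suc.prems that
          by (intro pd_bilinear[symmetric] assms(2) smooth_on_differentiable_at[OF _ assms(1)])
      qed
      ultimately have "iter_pd ds' (pd d (\<lambda>w. b (f w) (g w))) differentiable_on \<Omega>"
        by (rule differentiable_on_cong_open[OF _ assms(1)])
      then show ?thesis
        by (simp add: snoc iter_pd_append)
    qed
  qed
qed

lemma smooth_on_bilinear:
  fixes f :: "complex \<Rightarrow> 'a::real_normed_vector" and g :: "complex \<Rightarrow> 'b::real_normed_vector"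
    and b :: "'a \<Rightarrow> 'b \<Rightarrow> 'c::real_normed_vector"
  assumes "open \<Omega>" "bounded_bilinear b" "smooth_on \<Omega> f" "smooth_on \<Omega> g"
  shows "smooth_on \<Omega> (\<lambda>w. b (f w) (g w))"
  using differentiable_upto_bilinear[OF assms] smooth_on_iff_differentiable_upto by blast

section \<open>Symmetry of second partial derivatives\<close>

lemma has_real_derivative_pd_line:
  fixes \<phi> :: "complex \<Rightarrow> real"
  assumes "\<phi> differentiable (at (p + of_real x * d))"
  shows "((\<lambda>t. \<phi> (p + of_real t * d)) has_real_derivative pd d \<phi> (p + of_real x * d)) (at x)"
proof -
  have "((\<lambda>t. p + of_real t * d) has_derivative (\<lambda>t. t *\<^sub>R d)) (at x)"
    by (auto intro!: derivative_eq_intros simp: scaleR_conv_of_real)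
  from has_derivative_compose[OF this has_derivative_pd[OF assms]]
  have "((\<lambda>t. \<phi> (p + of_real t * d)) has_derivative (\<lambda>t. pd (t *\<^sub>R d) \<phi> (p + of_real x * d))) (at x)"
    by simp
  moreover have "pd (t *\<^sub>R d) \<phi> (p + of_real x * d) = pd d \<phi> (p + of_real x * d) * t" for t
    using linear_cmul[OF has_derivative_linear[OF has_derivative_pd[OF assms]]] by simp
  ultimately show ?thesis
    by (simp add: has_field_derivative_def)
qed

text \<open>Two applications of the mean value theorem to the second difference over the parallelogram
  spanned by \<open>h d1\<close> and \<open>h d2\<close>.\<close>

lemma second_difference_eq_mixed_pd:
  fixes \<phi> :: "complex \<Rightarrow> real"
  assumes "0 < h" "open \<Omega>" "smooth_on \<Omega> \<phi>"
    and square: "\<And>x y. 0 \<le> x \<Longrightarrow> x \<le> h \<Longrightarrow> 0 \<le> y \<Longrightarrow> y \<le> h \<Longrightarrow> z + of_real x * d1 + of_real y * d2 \<in> \<Omega>"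
  obtains s t where "0 < s" "s < h" "0 < t" "t < h"
    "\<phi> (z + of_real h * d1 + of_real h * d2) - \<phi> (z + of_real h * d1) - \<phi> (z + of_real h * d2) + \<phi> z
       = h * h * pd d2 (pd d1 \<phi>) (z + of_real s * d1 + of_real t * d2)"
proof -
  have square': "z + of_real y * d2 + of_real x * d1 \<in> \<Omega>" "z + of_real x * d1 \<in> \<Omega>"
    if "0 \<le> x" "x \<le> h" "0 \<le> y" "y \<le> h" for x y
    using square[OF that] square[of x 0] that \<open>0 < h\<close> by (simp_all add: add_ac)
  have diff: "\<phi> differentiable (at w)" "pd d1 \<phi> differentiable (at w)" if "w \<in> \<Omega>" for w
    using that smooth_on_differentiable_at[OF _ assms(2)] smooth_on_pd assms(3) by blast+
  define F where "F x = \<phi> (z + of_real h * d2 + of_real x * d1) - \<phi> (z + of_real x * d1)" for x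
  have "(F has_real_derivative pd d1 \<phi> (z + of_real h * d2 + of_real x * d1) - pd d1 \<phi> (z + of_real x * d1)) (at x)"
    if "0 \<le> x" "x \<le> h" for x
    unfolding F_def using that \<open>0 < h\<close>
    by (intro DERIV_diff has_real_derivative_pd_line[of _ "_ + _"] has_real_derivative_pd_line[of _ z]
        diff square') auto
  from MVT2[OF \<open>0 < h\<close> this] obtain s where s: "0 < s" "s < h"
    "F h - F 0 = h * (pd d1 \<phi> (z + of_real h * d2 + of_real s * d1) - pd d1 \<phi> (z + of_real s * d1))"
    by auto
  have "((\<lambda>y. pd d1 \<phi> (z + of_real s * d1 + of_real y * d2))
      has_real_derivative pd d2 (pd d1 \<phi>) (z + of_real s * d1 + of_real y * d2)) (at y)"
    if "0 \<le> y" "y \<le> h" for y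
    using s that by (intro has_real_derivative_pd_line diff square) auto
  from MVT2[OF \<open>0 < h\<close> this] obtain t where t: "0 < t" "t < h"
    "pd d1 \<phi> (z + of_real s * d1 + of_real h * d2) - pd d1 \<phi> (z + of_real s * d1)
       = h * pd d2 (pd d1 \<phi>) (z + of_real s * d1 + of_real t * d2)"
    by auto
  have "\<phi> (z + of_real h * d1 + of_real h * d2) - \<phi> (z + of_real h * d1) - \<phi> (z + of_real h * d2) + \<phi> z
      = F h - F 0"
    by (simp add: F_def add_ac)
  also have "\<dots> = h * h * pd d2 (pd d1 \<phi>) (z + of_real s * d1 + of_real t * d2)"
    using s(3) t(3) by (simp add: add_ac)
  finally show ?thesis
    using that s t by blast
qed

lemma mixed_pds_meet_near:
  fixes \<phi> :: "complex \<Rightarrow> real"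
  assumes "open \<Omega>" "smooth_on \<Omega> \<phi>" "\<epsilon> > 0" "ball z \<epsilon> \<subseteq> \<Omega>"
  obtains w1 w2 where "dist w1 z < \<epsilon>" "dist w2 z < \<epsilon>" "pd d2 (pd d1 \<phi>) w1 = pd d1 (pd d2 \<phi>) w2"
proof -
  define h where "h = \<epsilon> / (norm d1 + norm d2 + 1)"
  have "norm d1 + norm d2 + 1 > 0"
    using norm_ge_zero[of d1] norm_ge_zero[of d2] by linarith
  then have h: "h > 0" "h * (norm d1 + norm d2 + 1) = \<epsilon>"
    using assms(3) by (simp_all add: h_def)
  have close: "dist (z + of_real x * d1 + of_real y * d2) z < \<epsilon>"
    if "0 \<le> x" "x \<le> h" "0 \<le> y" "y \<le> h" for x y
  proof -
    have "dist (z + of_real x * d1 + of_real y * d2) z \<le> x * norm d1 + y * norm d2"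
      using that norm_triangle_ineq[of "of_real x * d1" "of_real y * d2"]
      by (simp add: dist_norm norm_mult)
    also have "\<dots> \<le> h * norm d1 + h * norm d2"
      using that by (intro add_mono mult_right_mono) auto
    also have "\<dots> < \<epsilon>"
      using h by (simp add: algebra_simps)
    finally show ?thesis .
  qed
  have square: "z + of_real x * d1 + of_real y * d2 \<in> \<Omega>" "z + of_real y * d2 + of_real x * d1 \<in> \<Omega>"
    if "0 \<le> x" "x \<le> h" "0 \<le> y" "y \<le> h" for x y
    using close[OF that] assms(4) by (auto simp: dist_commute add_ac)
  obtain s t where st: "0 < s" "s < h" "0 < t" "t < h"
    "\<phi> (z + of_real h * d1 + of_real h * d2) - \<phi> (z + of_real h * d1) - \<phi> (z + of_real h * d2) + \<phi> z
       = h * h * pd d2 (pd d1 \<phi>) (z + of_real s * d1 + of_real t * d2)"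
    using second_difference_eq_mixed_pd[OF h(1) assms(1,2) square(1)] by blast
  obtain s' t' where st': "0 < s'" "s' < h" "0 < t'" "t' < h"
    "\<phi> (z + of_real h * d2 + of_real h * d1) - \<phi> (z + of_real h * d2) - \<phi> (z + of_real h * d1) + \<phi> z
       = h * h * pd d1 (pd d2 \<phi>) (z + of_real s' * d2 + of_real t' * d1)"
    using second_difference_eq_mixed_pd[OF h(1) assms(1,2) square(2)] by blast
  have "h * h * pd d2 (pd d1 \<phi>) (z + of_real s * d1 + of_real t * d2)
      = h * h * pd d1 (pd d2 \<phi>) (z + of_real s' * d2 + of_real t' * d1)"
    using st(5) st'(5) by (simp only: add_ac)
  then have "pd d2 (pd d1 \<phi>) (z + of_real s * d1 + of_real t * d2)
      = pd d1 (pd d2 \<phi>) (z + of_real s' * d2 + of_real t' * d1)"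
    using h(1) by simp
  moreover have "dist (z + of_real s' * d2 + of_real t' * d1) z < \<epsilon>"
    using close[of t' s'] st' by (simp add: add_ac)
  moreover have "dist (z + of_real s * d1 + of_real t * d2) z < \<epsilon>"
    using close[of s t] st by simp
  ultimately show ?thesis
    using that by blast
qed

lemma pd_commute_real:
  fixes \<phi> :: "complex \<Rightarrow> real"
  assumes "open \<Omega>" "z \<in> \<Omega>" "smooth_on \<Omega> \<phi>"
  shows "pd d2 (pd d1 \<phi>) z = pd d1 (pd d2 \<phi>) z"
proof (rule ccontr)
  define e where "e = \<bar>pd d2 (pd d1 \<phi>) z - pd d1 (pd d2 \<phi>) z\<bar> / 2"
  assume "pd d2 (pd d1 \<phi>) z \<noteq> pd d1 (pd d2 \<phi>) z"
  then have "e > 0"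
    by (simp add: e_def)
  have cont: "isCont (pd d2 (pd d1 \<phi>)) z" "isCont (pd d1 (pd d2 \<phi>)) z"
    using smooth_on_differentiable_at[OF smooth_on_pd[OF smooth_on_pd[OF assms(3)]] assms(1,2)]
    by (simp_all add: differentiable_imp_continuous_within)
  obtain \<delta>1 where \<delta>1: "\<delta>1 > 0" "\<And>w. dist w z < \<delta>1 \<Longrightarrow> dist (pd d2 (pd d1 \<phi>) w) (pd d2 (pd d1 \<phi>) z) < e"
    using cont(1) \<open>e > 0\<close> unfolding continuous_at_eps_delta by blast
  obtain \<delta>2 where \<delta>2: "\<delta>2 > 0" "\<And>w. dist w z < \<delta>2 \<Longrightarrow> dist (pd d1 (pd d2 \<phi>) w) (pd d1 (pd d2 \<phi>) z) < e"
    using cont(2) \<open>e > 0\<close> unfolding continuous_at_eps_delta by blast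
  obtain r where r: "r > 0" "ball z r \<subseteq> \<Omega>"
    using assms(1,2) open_contains_ball by blast
  have "min (min \<delta>1 \<delta>2) r > 0" "ball z (min (min \<delta>1 \<delta>2) r) \<subseteq> \<Omega>"
    using \<delta>1(1) \<delta>2(1) r by auto
  then obtain w1 w2 where w: "dist w1 z < min (min \<delta>1 \<delta>2) r" "dist w2 z < min (min \<delta>1 \<delta>2) r"
    "pd d2 (pd d1 \<phi>) w1 = pd d1 (pd d2 \<phi>) w2"
    using mixed_pds_meet_near[OF assms(1,3)] by blast
  then have "\<bar>pd d2 (pd d1 \<phi>) w1 - pd d2 (pd d1 \<phi>) z\<bar> < e"
    "\<bar>pd d2 (pd d1 \<phi>) w1 - pd d1 (pd d2 \<phi>) z\<bar> < e"
    using \<delta>1(2)[of w1] \<delta>2(2)[of w2] by (simp_all add: dist_real_def)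
  then show False
    using abs_triangle_ineq[of "pd d2 (pd d1 \<phi>) z - pd d2 (pd d1 \<phi>) w1" "pd d2 (pd d1 \<phi>) w1 - pd d1 (pd d2 \<phi>) z"]
    by (simp add: e_def abs_minus_commute)
qed

lemma pd_commute:
  fixes f :: "complex \<Rightarrow> 'b::euclidean_space"
  assumes "open \<Omega>" "z \<in> \<Omega>" "smooth_on \<Omega> f"
  shows "pd d2 (pd d1 f) z = pd d1 (pd d2 f) z"
proof (rule euclidean_eqI)
  fix b :: 'b
  have bl: "bounded_linear (\<lambda>x. x \<bullet> b)"
    by (rule bounded_linear_inner_left)
  have "pd d2 (pd d1 (\<lambda>w. f w \<bullet> b)) z = pd d1 (pd d2 (\<lambda>w. f w \<bullet> b)) z"
    by (rule pd_commute_real[OF assms(1,2) smooth_on_linear[OF assms(1) bl assms(3)]])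
  then show "pd d2 (pd d1 f) z \<bullet> b = pd d1 (pd d2 f) z \<bullet> b"
    using iter_pd_linear[OF assms(1) bl assms(3,2), of "[d2, d1]"]
      iter_pd_linear[OF assms(1) bl assms(3,2), of "[d1, d2]"] by simp
qed

section \<open>Part (a): the Gauss invariant is constant\<close>

text \<open>The data of (a) at one point: \<open>fu\<close>, \<open>fv\<close> are the coordinate derivatives of \<open>\<psi>\<close>, \<open>\<eta>\<close> its
  canonical normal, \<open>N = fst \<psi>\<close>, and \<open>g\<close>, \<open>gu\<close>, \<open>gv\<close> the Gauss map with its derivatives. The second
  derivatives of \<open>\<psi>\<close> have been eliminated by differentiating \<open>\<langle>\<psi>\<^sub>d, (g, 1)\<rangle> = 0\<close> and
  \<open>\<langle>\<psi>\<^sub>d, (N, 0)\<rangle> = 0\<close>: this turns \<open>H = 1/2\<close> into \<open>mean_curvature\<close> and \<open>\<psi>\<^sub>u\<^sub>v = \<psi>\<^sub>v\<^sub>u\<close>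
  into \<open>symmetric\<close>.\<close>

locale cmc_half_frame =
  fixes fu fv \<eta> :: L4 and N g gu gv :: L3
  assumes conformal: "lor4 fu fu = lor4 fv fv" "lor4 fu fv = 0" "lor4 fu fu > 0"
    and N_H2: "N \<in> H2"
    and N_tangent: "lor4 (N, 0) fu = 0" "lor4 (N, 0) fv = 0"
    and unit_normal: "lor4 \<eta> fu = 0" "lor4 \<eta> fv = 0" "lor4 \<eta> (N, 0) = 0" "lor4 \<eta> \<eta> = 1"
    and canonical: "snd \<eta> > 0"
    and gauss_map: "(g, 1) = (1 / snd \<eta>) *\<^sub>R (\<eta> + (N, 0))"
    and gauss_derivatives: "lor3 g gu = 0" "lor3 g gv = 0"
    and gauss_conformal: "lor3 gu gu = lor3 gv gv" "lor3 gu gv = 0"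
    and symmetric: "lor4 (gv, 0) fu = lor4 (gu, 0) fv"
    and mean_curvature: "lor4 (fst fu, 0) fu + lor4 (fst fv, 0) fv
      - snd \<eta> * (lor4 (gu, 0) fu + lor4 (gv, 0) fv) = lor4 fu fu"
begin

lemma swap: "cmc_half_frame fv fu \<eta> N g gv gu"
  using conformal N_H2 N_tangent unit_normal canonical gauss_map gauss_derivatives gauss_conformal
    symmetric mean_curvature
  by unfold_locales (simp_all add: lor4_commute[of fv fu] lor3_commute[of gv gu] algebra_simps)

lemma normal_decomposition:
  obtains u where "u = snd \<eta>" "u > 0" "\<eta> = u *\<^sub>R (g, 1) - (N, 0)"
proof (rule that[OF refl canonical])
  have "snd \<eta> *\<^sub>R (g, 1) = \<eta> + (N, 0)"
    using canonical by (subst gauss_map) simp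
  then show "\<eta> = snd \<eta> *\<^sub>R (g, 1) - (N, 0)"
    by simp
qed

lemma N_unit: "lor3 N N = -1"
  using N_H2 by (simp add: H2_def)

lemma gauss_N: "snd \<eta> * lor3 g N = -1"
proof -
  obtain u where u: "u = snd \<eta>" "\<eta> = u *\<^sub>R (g, 1) - (N, 0)"
    using normal_decomposition by blast
  show ?thesis
    using unit_normal(3)[unfolded u(2) lor4_diff_left lor4_scaleR_left] N_unit u(1) by simp
qed

lemma gauss_tangent: "lor4 (g, 1) fu = 0" "lor4 (g, 1) fv = 0"
proof -
  obtain u where u: "u > 0" "\<eta> = u *\<^sub>R (g, 1) - (N, 0)"
    using normal_decomposition by blast
  show "lor4 (g, 1) fu = 0" "lor4 (g, 1) fv = 0"
    using unit_normal(1,2)[unfolded u(2) lor4_diff_left lor4_scaleR_left] N_tangent u(1) by simp_all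
qed

lemma gauss_unit: "lor3 g g = -1"
proof -
  obtain u where u: "u = snd \<eta>" "u > 0" "\<eta> = u *\<^sub>R (g, 1) - (N, 0)"
    using normal_decomposition by blast
  have "1 = u * u * (lor3 g g + 1) - 2 * (u * lor3 g N) + lor3 N N"
    using unit_normal(4)
    unfolding u(3) lor4_diff_left lor4_diff_right lor4_scaleR_left lor4_scaleR_right lor4_Pair
    by (simp add: lor3_commute[of N g] algebra_simps)
  then show ?thesis
    using gauss_N N_unit u(1,2) by simp
qed

lemma orthogonal_basis: "lor4_orthogonal_basis fu fv \<eta> (N, 0)"
  using conformal N_tangent unit_normal N_unit lor4_commute[of fu \<eta>] lor4_commute[of fv \<eta>]
    lor4_commute[of fu "(N, 0)"] lor4_commute[of fv "(N, 0)"]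
  by (simp add: lor4_orthogonal_basis_def)

lemma gauss_trace: "lor4 (gu, 0) fu + lor4 (gv, 0) fv = lor4 fu fu * snd \<eta>"
proof -
  define lam where "lam = lor4 fu fu"
  have lam: "lam > 0" "lor4 fv fv = lam"
    using conformal by (simp_all add: lam_def)
  have "1 = snd fu * snd fu / lam + snd fv * snd fv / lam + snd \<eta> * snd \<eta>"
    using lor4_orthogonal_basis_inner[OF orthogonal_basis, of "(0, 1)" "(0, 1)"] N_unit unit_normal(4)
    by (simp add: lor4_vertical lam lam_def)
  then have "snd fu * snd fu + snd fv * snd fv = lam * (1 - snd \<eta> * snd \<eta>)"
    using lam by (simp add: field_simps)
  then have "snd \<eta> * (lor4 (gu, 0) fu + lor4 (gv, 0) fv) = snd \<eta> * (lam * snd \<eta>)"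
    using mean_curvature lam by (simp add: lor4_def lam_def algebra_simps)
  then show ?thesis
    using canonical by (simp add: lam_def)
qed

lemma gauss_derivative_coefficients:
  shows "lor4 (gu, 0) fu = lor4 fu fu * snd \<eta> / 2" and "lor4 (gu, 0) fv = 0"
    and "snd fu = 2 * lor3 gu N"
proof -
  define lam where "lam = lor4 fu fu"
  obtain u where u: "u = snd \<eta>" "u > 0" "\<eta> = u *\<^sub>R (g, 1) - (N, 0)"
    using normal_decomposition by blast
  have lam: "lam > 0" "lor4 fv fv = lam"
    using conformal by (simp_all add: lam_def)
  note expand = lor4_orthogonal_basis_inner[OF orthogonal_basis]
  define \<alpha> \<beta> \<delta> where "\<alpha> = lor4 (gu, 0) fu" and "\<beta> = lor4 (gu, 0) fv" and "\<delta> = lor4 (gv, 0) fv"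
  define \<rho>u \<rho>v where "\<rho>u = lor3 gu N" and "\<rho>v = lor3 gv N"
  have \<eta>_gu: "lor4 (gu, 0) \<eta> = - \<rho>u" and \<eta>_gv: "lor4 (gv, 0) \<eta> = - \<rho>v"
    using gauss_derivatives by (simp_all add: u(3) \<rho>u_def \<rho>v_def lor3_commute[of g])
  have sum: "\<alpha> + \<delta> = lam * u"
    using gauss_trace by (simp add: \<alpha>_def \<delta>_def lam_def u(1))
  have "lor3 gu gv = (\<alpha> * \<beta> + \<beta> * \<delta>) / lam"
    using expand[of "(gu, 0)" "(gv, 0)"] N_unit unit_normal(4)
    by (simp add: \<eta>_gu \<eta>_gv lam \<alpha>_def \<beta>_def \<delta>_def symmetric[symmetric] \<rho>u_def \<rho>v_def
        lam_def add_divide_distrib)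
  then have "\<beta> * (\<alpha> + \<delta>) = 0"
    using gauss_conformal(2) lam by (simp add: algebra_simps)
  then show \<beta>: "lor4 (gu, 0) fv = 0"
    using sum lam u(2) by (simp add: \<beta>_def)
  have "lor3 gu gu = (\<alpha> * \<alpha> + \<beta> * \<beta>) / lam" "lor3 gv gv = (\<beta> * \<beta> + \<delta> * \<delta>) / lam"
    using expand[of "(gu, 0)" "(gu, 0)"] expand[of "(gv, 0)" "(gv, 0)"] N_unit unit_normal(4)
    by (simp_all add: \<eta>_gu \<eta>_gv lam \<alpha>_def \<beta>_def \<delta>_def symmetric[symmetric] \<rho>u_def \<rho>v_def
        lam_def add_divide_distrib)
  then have "(\<alpha> - \<delta>) * (\<alpha> + \<delta>) = 0"
    using gauss_conformal(1) \<beta> lam by (simp add: \<beta>_def algebra_simps)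
  then have "\<alpha> = \<delta>"
    using sum lam u(2) by simp
  then show \<alpha>: "lor4 (gu, 0) fu = lor4 fu fu * snd \<eta> / 2"
    using sum by (simp add: \<alpha>_def lam_def u(1))
  have "0 = \<alpha> * snd fu / lam - \<rho>u * u"
    using expand[of "(gu, 0)" "(0, 1)"] \<beta> unit_normal(4) by (simp add: lor4_vertical \<eta>_gu lam \<alpha>_def lam_def u(1))
  then show "snd fu = 2 * lor3 gu N"
    using \<alpha> lam u(1,2) by (simp add: \<alpha>_def \<rho>u_def lam_def field_simps)
qed

lemma invariant_derivative_eq_0:
  "fu + (2 * (lor3 (fst fu) g + lor3 N gu)) *\<^sub>R (g, 1) + (2 * lor3 N g) *\<^sub>R (gu, 0) = 0"
proof (rule lor4_orthogonal_basis_eq_0[OF orthogonal_basis])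
  obtain u where u: "u = snd \<eta>" "u > 0" "\<eta> = u *\<^sub>R (g, 1) - (N, 0)"
    using normal_decomposition by blast
  define s where "s = lor3 N g"
  have us: "u * s = -1"
    using gauss_N u(1) by (simp add: s_def lor3_commute[of N])
  have fu_g: "lor3 (fst fu) g = - snd fu"
    using gauss_tangent(1) by (simp add: lor4_def lor3_commute[of g])
  note coeff = gauss_derivative_coefficients
  have "lor4 fu fu + s * (lor4 fu fu * u) = lor4 fu fu * (1 + u * s)"
    by (simp add: algebra_simps)
  also have "\<dots> = 0"
    using us by simp
  finally show "lor4 (fu + (2 * (lor3 (fst fu) g + lor3 N gu)) *\<^sub>R (g, 1) + (2 * lor3 N g) *\<^sub>R (gu, 0)) fu = 0"
    using gauss_tangent(1) u(1) by (simp add: s_def coeff(1) del: scaleR_Pair)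
  show "lor4 (fu + (2 * (lor3 (fst fu) g + lor3 N gu)) *\<^sub>R (g, 1) + (2 * lor3 N g) *\<^sub>R (gu, 0)) fv = 0"
    using gauss_tangent(2) coeff(2) conformal(2) by (simp del: scaleR_Pair)
  show "lor4 (fu + (2 * (lor3 (fst fu) g + lor3 N gu)) *\<^sub>R (g, 1) + (2 * lor3 N g) *\<^sub>R (gu, 0)) \<eta> = 0"
    using unit_normal(1) gauss_unit gauss_derivatives(1) coeff(3)
    by (simp add: u(3) fu_g lor4_commute[of fu] lor3_commute[of gu g] lor3_commute[of gu N]
        lor3_commute[of g N] algebra_simps del: scaleR_Pair)
  show "lor4 (fu + (2 * (lor3 (fst fu) g + lor3 N gu)) *\<^sub>R (g, 1) + (2 * lor3 N g) *\<^sub>R (gu, 0)) (N, 0) = 0"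
    using N_tangent(1) coeff(3)
    by (simp add: fu_g lor4_commute[of fu] lor3_commute[of gu N] lor3_commute[of g N] algebra_simps del: scaleR_Pair)
qed

end

definition gauss_invariant :: "L4 \<Rightarrow> L3 \<Rightarrow> L4" where
  "gauss_invariant x y = x + (2 * lor3 (fst x) y) *\<^sub>R (y, 1)"

lemmas has_derivative_lor3 = bounded_bilinear.FDERIV[OF bounded_bilinear_lor3]

lemma has_derivative_gauss_invariant:
  fixes f :: "complex \<Rightarrow> L4" and g :: "complex \<Rightarrow> L3"
  assumes "f differentiable (at z)" "g differentiable (at z)"
  shows "((\<lambda>w. gauss_invariant (f w) (g w)) has_derivative (\<lambda>d. pd d f z
      + (2 * (lor3 (fst (pd d f z)) (g z) + lor3 (fst (f z)) (pd d g z))) *\<^sub>R (g z, 1)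
      + (2 * lor3 (fst (f z)) (g z)) *\<^sub>R (pd d g z, 0))) (at z)"
  unfolding gauss_invariant_def
  by (rule derivative_eq_intros has_derivative_lor3 has_derivative_pd assms refl)+ (simp add: fun_eq_iff algebra_simps)

lemma pd_lor4_eq_0_if_constant_on:
  fixes A B :: "complex \<Rightarrow> L4"
  assumes "open \<Omega>" "z \<in> \<Omega>" "A differentiable (at z)" "B differentiable (at z)"
    and "\<And>w. w \<in> \<Omega> \<Longrightarrow> lor4 (A w) (B w) = c"
  shows "lor4 (pd d A z) (B z) + lor4 (A z) (pd d B z) = 0"
  using pd_eq_0_if_constant_on[OF assms(1,2,5)] pd_bilinear[OF bounded_bilinear_lor4 assms(3,4)]
  by simp

lemma pd_lor3_eq_0_if_constant_on:
  fixes A B :: "complex \<Rightarrow> L3"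
  assumes "open \<Omega>" "z \<in> \<Omega>" "A differentiable (at z)" "B differentiable (at z)"
    and "\<And>w. w \<in> \<Omega> \<Longrightarrow> lor3 (A w) (B w) = c"
  shows "lor3 (pd d A z) (B z) + lor3 (A z) (pd d B z) = 0"
  using pd_eq_0_if_constant_on[OF assms(1,2,5)] pd_bilinear[OF bounded_bilinear_lor3 assms(3,4)]
  by simp

lemma differentiable_Pair_const:
  fixes g :: "complex \<Rightarrow> 'a::real_normed_vector"
  shows "g differentiable (at z) \<Longrightarrow> (\<lambda>w. (g w, c)) differentiable (at z)"
  using has_derivative_Pair[OF has_derivative_pd has_derivative_const[of c]]
  unfolding differentiable_def by blast

locale cmc_half_chart =
  fixes \<Omega> :: "complex set" and f :: "complex \<Rightarrow> L4" and g :: "complex \<Rightarrow> L3"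
  assumes open_domain: "open \<Omega>" and smooth: "smooth_on \<Omega> f" "smooth_on \<Omega> g"
    and H2: "\<And>w. w \<in> \<Omega> \<Longrightarrow> fst (f w) \<in> H2" "\<And>w. w \<in> \<Omega> \<Longrightarrow> g w \<in> H2"
    and conformal_f: "\<And>w. w \<in> \<Omega> \<Longrightarrow> lor4 (pd 1 f w) (pd 1 f w) = lor4 (pd \<i> f w) (pd \<i> f w)"
      "\<And>w. w \<in> \<Omega> \<Longrightarrow> lor4 (pd 1 f w) (pd \<i> f w) = 0"
      "\<And>w. w \<in> \<Omega> \<Longrightarrow> lor4 (pd 1 f w) (pd 1 f w) > 0"
    and conformal_g: "\<And>w. w \<in> \<Omega> \<Longrightarrow> lor3 (pd 1 g w) (pd 1 g w) = lor3 (pd \<i> g w) (pd \<i> g w)"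
      "\<And>w. w \<in> \<Omega> \<Longrightarrow> lor3 (pd 1 g w) (pd \<i> g w) = 0"
    and regular: "\<And>w \<eta>. w \<in> \<Omega> \<Longrightarrow> unit_normal f w \<eta> \<Longrightarrow> snd \<eta> \<noteq> 0"
    and cmc: "\<And>w \<eta>. w \<in> \<Omega> \<Longrightarrow> unit_normal f w \<eta> \<Longrightarrow> snd \<eta> > 0 \<Longrightarrow> mean_curv f w \<eta> = 1/2"
    and gauss: "\<And>w \<eta>. w \<in> \<Omega> \<Longrightarrow> unit_normal f w \<eta> \<Longrightarrow> snd \<eta> > 0 \<Longrightarrow>
      (g w, 1) = (1 / snd \<eta>) *\<^sub>R (\<eta> + (fst (f w), 0))"
begin

lemma differentiable:
  assumes "w \<in> \<Omega>"
  shows "f differentiable (at w)" "pd d f differentiable (at w)"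
    and "(\<lambda>w. (fst (f w), 0 :: real)) differentiable (at w)" "(\<lambda>w. (g w, c :: real)) differentiable (at w)"
proof -
  show f: "f differentiable (at w)" "pd d f differentiable (at w)"
    using smooth_on_differentiable_at[OF _ open_domain assms] smooth smooth_on_pd by blast+
  show "(\<lambda>w. (fst (f w), 0 :: real)) differentiable (at w)"
    by (intro differentiable_linear[OF _ f(1)] bounded_linear_Pair bounded_linear_fst bounded_linear_zero)
  show "(\<lambda>w. (g w, c :: real)) differentiable (at w)"
    using smooth_on_differentiable_at[OF smooth(2) open_domain assms]
    by (rule differentiable_Pair_const)
qed

lemma pd_fst_Pair:
  "w \<in> \<Omega> \<Longrightarrow> pd d (\<lambda>w. (fst (f w), 0 :: real)) w = (fst (pd d f w), 0)"
  using differentiable(1) bounded_linear_Pair[OF bounded_linear_fst bounded_linear_zero]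
  by (rule pd_linear[rotated])

lemma pd_g_Pair: "w \<in> \<Omega> \<Longrightarrow> pd d (\<lambda>w. (g w, c)) w = (pd d g w, 0)"
  using smooth_on_differentiable_at[OF smooth(2) open_domain] by (rule pd_Pair_const)

lemma N_tangent:
  assumes "w \<in> \<Omega>"
  shows "lor4 (fst (f w), 0) (pd d f w) = 0"
proof -
  have "lor4 (fst (f v), 0) (f v) = -1" if "v \<in> \<Omega>" for v
    using H2(1)[OF that] by (simp add: H2_def lor4_def)
  from pd_lor4_eq_0_if_constant_on[OF open_domain assms differentiable(3,1)[OF assms] this]
  show ?thesis
    using assms by (simp add: pd_fst_Pair lor4_def lor3_commute)
qed

lemma canonical_normal_exists:
  assumes "w \<in> \<Omega>"
  obtains \<eta> where "unit_normal f w \<eta>" "snd \<eta> > 0"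
proof -
  have N: "lor4 (fst (f w), 0) (fst (f w), 0) = -1"
    using H2(1)[OF assms] by (simp add: H2_def)
  have orth: "lor4 (pd 1 f w) (fst (f w), 0) = 0" "lor4 (pd \<i> f w) (fst (f w), 0) = 0"
    using N_tangent[OF assms] lor4_commute by metis+
  have nonnull: "lor4 (pd 1 f w) (pd 1 f w) \<noteq> 0" "lor4 (pd \<i> f w) (pd \<i> f w) \<noteq> 0"
    "lor4 (fst (f w), 0) (fst (f w), 0) \<noteq> 0"
    using conformal_f(1,3)[OF assms] N by auto
  obtain n where n: "n \<noteq> 0" "lor4 n (pd 1 f w) = 0" "lor4 n (pd \<i> f w) = 0"
    "lor4 n (fst (f w), 0) = 0"
    by (rule lor4_exists_orthogonal[OF conformal_f(2)[OF assms] orth nonnull])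
  have "lor4 n n > 0"
    using lor4_pos_if_orthogonal_H2[OF H2(1)[OF assms] n(4,1)] .
  then have "(1 / sqrt (lor4 n n)) * (1 / sqrt (lor4 n n) * lor4 n n) = 1"
    by (simp add: field_simps)
  then have unit: "unit_normal f w ((1 / sqrt (lor4 n n)) *\<^sub>R n)"
    unfolding unit_normal_def lor4_scaleR_left lor4_scaleR_right using n by simp
  then have "unit_normal f w (- ((1 / sqrt (lor4 n n)) *\<^sub>R n))"
    unfolding unit_normal_def lor4_minus_left lor4_minus_right by (simp only: neg_equal_0_iff_equal minus_minus)
  with unit regular[OF assms] show ?thesis
    using that by (cases "snd ((1 / sqrt (lor4 n n)) *\<^sub>R n) > 0") fastforce+
qed

lemma gauss_tangent:
  assumes "w \<in> \<Omega>" "d = 1 \<or> d = \<i>"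
  shows "lor4 (g w, 1) (pd d f w) = 0"
proof -
  obtain \<eta> where \<eta>: "unit_normal f w \<eta>" "snd \<eta> > 0"
    using canonical_normal_exists[OF assms(1)] .
  have "lor4 \<eta> (pd d f w) = 0"
    using \<eta>(1) assms(2) by (auto simp: unit_normal_def)
  then show ?thesis
    using N_tangent[OF assms(1), of d]
    by (subst gauss[OF assms(1) \<eta>]) (simp only: lor4_scaleR_left lor4_add_left, simp)
qed

lemma N_tangent_pd:
  assumes "z \<in> \<Omega>"
  shows "lor4 (pd d (pd d f) z) (fst (f z), 0) = - lor4 (fst (pd d f z), 0) (pd d f z)"
proof -
  have "lor4 (pd d (\<lambda>w. (fst (f w), 0)) z) (pd d f z) + lor4 (fst (f z), 0) (pd d (pd d f) z) = 0"
    by (rule pd_lor4_eq_0_if_constant_on[OF open_domain assms differentiable(3,2)[OF assms]])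
      (rule N_tangent)
  then show ?thesis
    using lor4_commute[of "pd d (pd d f) z" "(fst (f z), 0)"] by (simp add: pd_fst_Pair[OF assms])
qed

lemma gauss_tangent_pd:
  assumes "z \<in> \<Omega>" "d = 1 \<or> d = \<i>"
  shows "lor4 (pd d' (pd d f) z) (g z, 1) = - lor4 (pd d' g z, 0) (pd d f z)"
proof -
  have "lor4 (pd d' (\<lambda>w. (g w, 1)) z) (pd d f z) + lor4 (g z, 1) (pd d' (pd d f) z) = 0"
    by (rule pd_lor4_eq_0_if_constant_on[OF open_domain assms(1) differentiable(4,2)[OF assms(1)]])
      (rule gauss_tangent[OF _ assms(2)])
  then show ?thesis
    using lor4_commute[of "pd d' (pd d f) z" "(g z, 1)"] by (simp add: pd_g_Pair[OF assms(1)])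
qed

lemma gauss_orthogonal_pd:
  assumes "z \<in> \<Omega>"
  shows "lor3 (g z) (pd d g z) = 0"
proof -
  have "lor4 (g w, 0) (g w, 0) = -1" if "w \<in> \<Omega>" for w
    using H2(2)[OF that] by (simp add: H2_def)
  from pd_lor4_eq_0_if_constant_on[OF open_domain assms differentiable(4,4)[OF assms] this, where d = d]
  show ?thesis
    by (simp add: pd_g_Pair[OF assms] lor3_commute[of "pd d g z"])
qed

lemma gauss_symmetric:
  assumes "z \<in> \<Omega>"
  shows "lor4 (pd \<i> g z, 0) (pd 1 f z) = lor4 (pd 1 g z, 0) (pd \<i> f z)"
  using gauss_tangent_pd[OF assms, of 1 \<i>] gauss_tangent_pd[OF assms, of \<i> 1]
    pd_commute[OF open_domain assms smooth(1), of 1 \<i>]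
  by simp

lemma mean_curvature_first_order:
  assumes "z \<in> \<Omega>" "unit_normal f z \<eta>" "snd \<eta> > 0"
  shows "lor4 (fst (pd 1 f z), 0) (pd 1 f z) + lor4 (fst (pd \<i> f z), 0) (pd \<i> f z)
      - snd \<eta> * (lor4 (pd 1 g z, 0) (pd 1 f z) + lor4 (pd \<i> g z, 0) (pd \<i> f z))
      = lor4 (pd 1 f z) (pd 1 f z)"
proof -
  obtain u where u: "u = snd \<eta>" "\<eta> = u *\<^sub>R (g z, 1) - (fst (f z), 0)"
  proof (rule that[OF refl])
    have "snd \<eta> *\<^sub>R (g z, 1) = \<eta> + (fst (f z), 0)"
      using assms(3) by (subst gauss[OF assms]) simp
    then show "\<eta> = snd \<eta> *\<^sub>R (g z, 1) - (fst (f z), 0)"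
      by simp
  qed
  have "lor4 (lap f z) \<eta> = lor4 (pd 1 f z) (pd 1 f z)"
    using cmc[OF assms] conformal_f(3)[OF assms(1)] by (simp add: mean_curv_def)
  moreover have "lor4 (lap f z) \<eta> = lor4 (fst (pd 1 f z), 0) (pd 1 f z) + lor4 (fst (pd \<i> f z), 0) (pd \<i> f z)
      - snd \<eta> * (lor4 (pd 1 g z, 0) (pd 1 f z) + lor4 (pd \<i> g z, 0) (pd \<i> f z))"
    unfolding lap_def u(2) lor4_add_left lor4_diff_right lor4_scaleR_right
    using N_tangent_pd[OF assms(1)] gauss_tangent_pd[OF assms(1), of 1 1] gauss_tangent_pd[OF assms(1), of \<i> \<i>]
      u(1)
    by (simp add: algebra_simps)
  ultimately show ?thesis
    by simp
qed

lemma frame: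
  assumes "z \<in> \<Omega>"
  obtains \<eta> where "cmc_half_frame (pd 1 f z) (pd \<i> f z) \<eta> (fst (f z)) (g z) (pd 1 g z) (pd \<i> g z)"
proof -
  obtain \<eta> where \<eta>: "unit_normal f z \<eta>" "snd \<eta> > 0"
    using canonical_normal_exists[OF assms] .
  have normal: "lor4 \<eta> (pd 1 f z) = 0" "lor4 \<eta> (pd \<i> f z) = 0" "lor4 \<eta> (fst (f z), 0) = 0" "lor4 \<eta> \<eta> = 1"
    using \<eta>(1) by (simp_all add: unit_normal_def)
  show ?thesis
    by (rule that, unfold_locales)
      (fact conformal_f[OF assms] H2(1)[OF assms] N_tangent[OF assms] normal \<eta>(2) gauss[OF assms \<eta>]
        gauss_orthogonal_pd[OF assms] conformal_g[OF assms] gauss_symmetric[OF assms]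
        mean_curvature_first_order[OF assms \<eta>])+
qed

lemma gauss_invariant_has_derivative_0:
  assumes "z \<in> \<Omega>"
  shows "((\<lambda>w. gauss_invariant (f w) (g w)) has_derivative (\<lambda>_. 0)) (at z)"
proof -
  obtain \<eta> where frame: "cmc_half_frame (pd 1 f z) (pd \<i> f z) \<eta> (fst (f z)) (g z) (pd 1 g z) (pd \<i> g z)"
    using frame[OF assms] .
  note derivative = has_derivative_gauss_invariant[OF differentiable(1)[OF assms]
      smooth_on_differentiable_at[OF smooth(2) open_domain assms]]
  show ?thesis
  proof (rule has_derivative_0_if_coordinate_pds_0)
    show "(\<lambda>w. gauss_invariant (f w) (g w)) differentiable (at z)"
      using derivative by (auto simp: differentiable_def)
    show "pd 1 (\<lambda>w. gauss_invariant (f w) (g w)) z = 0"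
      using pd_eqI[OF derivative] cmc_half_frame.invariant_derivative_eq_0[OF frame] by simp
    show "pd \<i> (\<lambda>w. gauss_invariant (f w) (g w)) z = 0"
      using pd_eqI[OF derivative] cmc_half_frame.invariant_derivative_eq_0[OF cmc_half_frame.swap[OF frame]]
      by simp
  qed
qed

end

lemma chart_properties:
  assumes "riemann_surface A" "(U, \<phi>) \<in> A"
  shows "open (\<phi> ` U)" "inj_on \<phi> U" "open U" "continuous_on U \<phi>"
  using assms unfolding riemann_surface_def by auto

lemma loc_apply: "inj_on \<phi> U \<Longrightarrow> p \<in> U \<Longrightarrow> loc F U \<phi> (\<phi> p) = F p"
  by (simp add: loc_def the_inv_into_f_f)

lemma eventually_eq_if_loc_has_derivative_0:
  fixes q :: "'a::t2_space \<Rightarrow> 'b::real_normed_vector"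
  assumes "riemann_surface A" "(U, \<phi>) \<in> A" "p \<in> U"
    and "\<And>w. w \<in> \<phi> ` U \<Longrightarrow> (loc q U \<phi> has_derivative (\<lambda>_. 0)) (at w)"
  shows "eventually (\<lambda>p'. q p = q p') (at p)"
proof -
  note U = chart_properties[OF assms(1,2)]
  obtain r where r: "r > 0" "ball (\<phi> p) r \<subseteq> \<phi> ` U"
    using U(1) assms(3) open_contains_ball by blast
  obtain c where c: "\<And>w. w \<in> ball (\<phi> p) r \<Longrightarrow> loc q U \<phi> w = c"
    using has_derivative_zero_constant[OF convex_ball] assms(4) r(2)
    by (metis has_derivative_at_withinI subsetD)
  define V where "V = \<phi> -` ball (\<phi> p) r \<inter> U"
  have "open V"
    using U(3,4) by (simp add: V_def continuous_on_open_vimage)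
  moreover have "p \<in> V"
    using assms(3) r(1) by (simp add: V_def)
  moreover have "q p' = q p" if "p' \<in> V" for p'
  proof -
    have "p' \<in> U" "\<phi> p' \<in> ball (\<phi> p) r"
      using that by (auto simp: V_def)
    then show ?thesis
      by (metis c loc_apply[OF U(2)] centre_in_ball r(1) assms(3))
  qed
  ultimately show ?thesis
    unfolding eventually_at_topological by metis
qed

lemma cmc_half_chart_loc:
  assumes "riemann_surface A" "conformal_immersion_H2R A \<psi>" "regular_vertical_projection A \<psi>"
    and "cmc_canonical A \<psi> (1/2)" "hyperbolic_gauss_map A \<psi> G" "conformal_H2 A G" "(U, \<phi>) \<in> A"
  shows "cmc_half_chart (\<phi> ` U) (loc \<psi> U \<phi>) (loc G U \<phi>)"
proof -
  note U = chart_properties[OF assms(1,7)]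
  have image: "w \<in> \<phi> ` U \<Longrightarrow> \<exists>p\<in>U. w = \<phi> p" for w
    by blast
  show ?thesis
  proof unfold_locales
    show "open (\<phi> ` U)"
      by (fact U(1))
    show "smooth_on (\<phi> ` U) (loc \<psi> U \<phi>)" "smooth_on (\<phi> ` U) (loc G U \<phi>)"
      using assms(2,6,7) unfolding conformal_immersion_H2R_def conformal_H2_def by auto
    show "fst (loc \<psi> U \<phi> w) \<in> H2" "loc G U \<phi> w \<in> H2" for w
      using assms(2,6) unfolding conformal_immersion_H2R_def conformal_H2_def by (simp_all add: loc_def)
  next
    fix w assume "w \<in> \<phi> ` U"
    with assms(2,6,7) show "lor4 (pd 1 (loc \<psi> U \<phi>) w) (pd 1 (loc \<psi> U \<phi>) w)
        = lor4 (pd \<i> (loc \<psi> U \<phi>) w) (pd \<i> (loc \<psi> U \<phi>) w)"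
      "lor4 (pd 1 (loc \<psi> U \<phi>) w) (pd \<i> (loc \<psi> U \<phi>) w) = 0"
      "lor4 (pd 1 (loc \<psi> U \<phi>) w) (pd 1 (loc \<psi> U \<phi>) w) > 0"
      "lor3 (pd 1 (loc G U \<phi>) w) (pd 1 (loc G U \<phi>) w) = lor3 (pd \<i> (loc G U \<phi>) w) (pd \<i> (loc G U \<phi>) w)"
      "lor3 (pd 1 (loc G U \<phi>) w) (pd \<i> (loc G U \<phi>) w) = 0"
      unfolding conformal_immersion_H2R_def conformal_H2_def Let_def by fast+
  next
    fix w \<eta> assume "w \<in> \<phi> ` U" "unit_normal (loc \<psi> U \<phi>) w \<eta>"
    with assms(3,7) show "snd \<eta> \<noteq> 0"
      unfolding regular_vertical_projection_def by fast
    assume "snd \<eta> > 0"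
    with assms(4,7) \<open>w \<in> \<phi> ` U\<close> \<open>unit_normal (loc \<psi> U \<phi>) w \<eta>\<close>
    show "mean_curv (loc \<psi> U \<phi>) w \<eta> = 1/2"
      unfolding cmc_canonical_def by fast
    from \<open>w \<in> \<phi> ` U\<close> obtain p where p: "p \<in> U" "w = \<phi> p"
      by blast
    have "\<forall>p\<in>U. \<forall>\<eta>. unit_normal (loc \<psi> U \<phi>) (\<phi> p) \<eta> \<and> snd \<eta> > 0
        \<longrightarrow> (G p, 1) = (1 / snd \<eta>) *\<^sub>R (\<eta> + (fst (\<psi> p), 0))"
      using assms(5,7) unfolding hyperbolic_gauss_map_def by fast
    then have "(G p, 1) = (1 / snd \<eta>) *\<^sub>R (\<eta> + (fst (\<psi> p), 0))"
      using p \<open>unit_normal (loc \<psi> U \<phi>) w \<eta>\<close> \<open>snd \<eta> > 0\<close> by blast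
    then show "(loc G U \<phi> w, 1) = (1 / snd \<eta>) *\<^sub>R (\<eta> + (fst (loc \<psi> U \<phi> w), 0))"
      by (simp only: p(2) loc_apply[OF U(2) p(1)])
  qed
qed

lemma gauss_invariant_eq_Pair:
  assumes "y \<in> H2" "gauss_invariant x y = (- a, c)"
  shows "a = hyp_reflect y (fst x)" "x = (- a, c) - (2 * lor3 a y) *\<^sub>R (y, 1)"
proof -
  have "fst x + (2 * lor3 (fst x) y) *\<^sub>R y = - a"
    using arg_cong[OF assms(2), of fst] by (simp add: gauss_invariant_def)
  then have "a = - (fst x + (2 * lor3 (fst x) y) *\<^sub>R y)"
    by simp
  then show a: "a = hyp_reflect y (fst x)"
    by (simp add: hyp_reflect_def)
  have "x = gauss_invariant x y - (2 * lor3 (fst x) y) *\<^sub>R (y, 1)"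
    by (simp add: gauss_invariant_def)
  then show "x = (- a, c) - (2 * lor3 a y) *\<^sub>R (y, 1)"
    using assms(2) lor3_hyp_reflect(1)[OF assms(1)] by (simp add: a)
qed

theorem cmc_half_gauss_representation:
  fixes \<psi> :: "'a::t2_space \<Rightarrow> L4" and G :: "'a \<Rightarrow> L3"
  assumes "riemann_surface A" "connected (UNIV :: 'a set)"
    and "conformal_immersion_H2R A \<psi>" "regular_vertical_projection A \<psi>"
    and "cmc_canonical A \<psi> (1/2)" "hyperbolic_gauss_map A \<psi> G" "conformal_H2 A G"
  shows "\<exists>a\<in>H2. \<exists>c. \<forall>p. \<psi> p = (- a, c) - (2 * lor3 a (G p)) *\<^sub>R (G p, 1)"
proof -
  define q where "q p = gauss_invariant (\<psi> p) (G p)" for p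
  have "eventually (\<lambda>p'. q p = q p') (at p)" for p
  proof -
    obtain U \<phi> where chart: "(U, \<phi>) \<in> A" "p \<in> U"
      using assms(1) unfolding riemann_surface_def by blast
    interpret cmc_half_chart "\<phi> ` U" "loc \<psi> U \<phi>" "loc G U \<phi>"
      by (rule cmc_half_chart_loc[OF assms(1,3-7) chart(1)])
    have "loc q U \<phi> = (\<lambda>w. gauss_invariant (loc \<psi> U \<phi> w) (loc G U \<phi> w))"
      by (simp add: loc_def q_def fun_eq_iff)
    then show ?thesis
      using gauss_invariant_has_derivative_0 by (intro eventually_eq_if_loc_has_derivative_0[OF assms(1) chart]) simp
  qed
  then have q_const: "q p = q p0" for p p0
    using connected_local_const[OF assms(2) UNIV_I UNIV_I, of q] by blast
  obtain a c where ac: "q undefined = (- a, c)"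
    by (metis prod.collapse minus_minus)
  have G: "G p \<in> H2" "fst (\<psi> p) \<in> H2" for p
    using assms(3,7) by (simp_all add: conformal_H2_def conformal_immersion_H2R_def)
  have "gauss_invariant (\<psi> p) (G p) = (- a, c)" for p
    using q_const[of p undefined] ac by (simp add: q_def)
  note representation = gauss_invariant_eq_Pair[OF G(1) this]
  have "a \<in> H2"
    unfolding representation(1)[of undefined] by (rule hyp_reflect_H2[OF G(1,2)])
  with representation(2) show ?thesis
    by blast
qed

section \<open>Part (b): the surface determined by a conformal Gauss map\<close>

text \<open>The derivative of \<open>(-a, 0) - 2 \<langle>a, G\<rangle> (G, 1)\<close> at a point where \<open>G = g\<close> and \<open>G\<^sub>d = gd\<close>.\<close>

definition reflected_derivative :: "L3 \<Rightarrow> L3 \<Rightarrow> L3 \<Rightarrow> L4" where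
  "reflected_derivative a g gd = - ((2 * lor3 a gd) *\<^sub>R (g, 1) + (2 * lor3 a g) *\<^sub>R (gd, 0))"

definition reflected_normal :: "L3 \<Rightarrow> L3 \<Rightarrow> L4" where
  "reflected_normal a g = (- 1 / lor3 a g) *\<^sub>R (g, 1) - (hyp_reflect g a, 0)"

locale reflected_frame =
  fixes a g gu gv guu gvv :: L3
  assumes a_H2: "a \<in> H2" and g_H2: "g \<in> H2"
    and tangent: "lor3 g gu = 0" "lor3 g gv = 0"
    and conformal: "lor3 gu gu = lor3 gv gv" "lor3 gu gv = 0" "lor3 gu gu > 0"
    and second: "lor3 g guu = - lor3 gu gu" "lor3 g gvv = - lor3 gv gv"
begin

abbreviation "fu \<equiv> reflected_derivative a g gu"
abbreviation "fv \<equiv> reflected_derivative a g gv"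
abbreviation "N \<equiv> hyp_reflect g a"
abbreviation "\<eta> \<equiv> reflected_normal a g"

lemma lor3_values:
  shows "lor3 a a = -1" "lor3 g g = -1" "lor3 a g < 0"
    and "lor3 gu g = 0" "lor3 gv g = 0" "lor3 gv gu = 0" "lor3 g a = lor3 a g"
    and "lor3 N g = lor3 a g" "lor3 g N = lor3 a g" "lor3 N N = -1"
    and "lor3 gu N = - lor3 a gu" "lor3 gv N = - lor3 a gv"
proof -
  show aa: "lor3 a a = -1" and gg: "lor3 g g = -1"
    using a_H2 g_H2 by (simp_all add: H2_def)
  show "lor3 a g < 0"
    using lor3_H2_le[OF a_H2 g_H2] by simp
  show gu: "lor3 gu g = 0" and gv: "lor3 gv g = 0" and "lor3 gv gu = 0" and ga: "lor3 g a = lor3 a g"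
    using tangent conformal(2) lor3_commute by metis+
  show "lor3 N g = lor3 a g" "lor3 g N = lor3 a g" "lor3 N N = -1"
    using lor3_hyp_reflect[OF g_H2, of a] aa lor3_commute[of g N] by simp_all
  show "lor3 gu N = - lor3 a gu" "lor3 gv N = - lor3 a gv"
    using gu gv by (simp_all add: hyp_reflect_def lor3_commute[of _ a])
qed

lemma reflected_derivative_inner:
  assumes "lor3 g x = 0" "lor3 g y = 0"
  shows "lor4 (reflected_derivative a g x) (reflected_derivative a g y) = 4 * lor3 a g * lor3 a g * lor3 x y"
proof -
  have "lor3 x g = 0"
    using assms(1) lor3_commute by metis
  then show ?thesis
    using assms lor3_values(2) by (simp add: reflected_derivative_def algebra_simps)
qed

lemma first_fundamental_form:
  shows "lor4 fu fu = lor4 fv fv" "lor4 fu fv = 0" "lor4 fu fu > 0"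
  using reflected_derivative_inner tangent conformal lor3_values(3) by (simp_all add: mult_pos_pos mult_neg_neg)

lemma canonical_normal:
  shows "lor4 \<eta> fu = 0" "lor4 \<eta> fv = 0" "lor4 \<eta> (N, 0) = 0" "lor4 \<eta> \<eta> = 1" "snd \<eta> > 0"
    and "lor4 fu (N, 0) = 0" "lor4 fv (N, 0) = 0"
proof -
  have t: "lor3 a g \<noteq> 0"
    using lor3_values(3) by simp
  have \<eta>_g: "lor4 \<eta> (g, 1) = - lor3 a g"
    using lor3_values t by (simp add: reflected_normal_def field_simps)
  have \<eta>_gd: "lor4 \<eta> (gd, 0) = lor3 a gd" if "lor3 g gd = 0" for gd
  proof -
    have "lor3 gd N = - lor3 a gd"
      using that by (simp add: hyp_reflect_def lor3_commute[of gd])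
    then show ?thesis
      using that by (simp add: reflected_normal_def lor3_commute[of N])
  qed
  show "lor4 \<eta> fu = 0" "lor4 \<eta> fv = 0"
    using \<eta>_g \<eta>_gd[OF tangent(1)] \<eta>_gd[OF tangent(2)]
    by (simp_all add: reflected_derivative_def algebra_simps del: scaleR_Pair)
  show "lor4 \<eta> (N, 0) = 0" "lor4 \<eta> \<eta> = 1" "snd \<eta> > 0"
    using lor3_values t by (simp_all add: reflected_normal_def field_simps power2_eq_square)
  show "lor4 fu (N, 0) = 0" "lor4 fv (N, 0) = 0"
    using lor3_values by (simp_all add: reflected_derivative_def algebra_simps)
qed

lemma normal_inner:
  shows "lor4 (x, 0) \<eta> = (2 * lor3 a g - 1 / lor3 a g) * lor3 g x + lor3 a x"
    and "lor4 (reflected_derivative a g x) \<eta> = (2 - 4 * lor3 a g * lor3 a g) * lor3 g x"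
proof -
  have t: "lor3 a g \<noteq> 0"
    using lor3_values(3) by simp
  show x: "lor4 (x, 0) \<eta> = (2 * lor3 a g - 1 / lor3 a g) * lor3 g x + lor3 a x"
    by (simp add: reflected_normal_def hyp_reflect_def lor3_commute[of x g] lor3_commute[of x a] algebra_simps)
  have "lor4 (g, 1) \<eta> = - lor3 a g"
    using lor3_values t by (simp add: reflected_normal_def field_simps)
  then show "lor4 (reflected_derivative a g x) \<eta> = (2 - 4 * lor3 a g * lor3 a g) * lor3 g x"
    using t by (simp add: reflected_derivative_def x field_simps del: scaleR_Pair)
qed

lemma mean_curvature:
  "lor4 (reflected_derivative a g guu - (4 * lor3 a gu) *\<^sub>R (gu, 0)
     + (reflected_derivative a g gvv - (4 * lor3 a gv) *\<^sub>R (gv, 0))) \<eta> = lor4 fu fu"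
proof -
  define \<mu> where "\<mu> = lor3 gu gu"
  have "lor4_orthogonal_basis (g, 0) (gu, 0) (gv, 0) (0, 1)"
    using tangent conformal lor3_values(2) by (simp add: lor4_orthogonal_basis_def lor4_def)
  from lor4_orthogonal_basis_inner[OF this, of "(a, 0)" "(a, 0)"]
  have "-1 = - lor3 a g * lor3 a g + lor3 a gu * lor3 a gu / \<mu> + lor3 a gv * lor3 a gv / \<mu>"
    using lor3_values(1,2) conformal by (simp add: \<mu>_def lor4_def)
  then have parseval: "lor3 a gu * lor3 a gu + lor3 a gv * lor3 a gv = \<mu> * (lor3 a g * lor3 a g - 1)"
    using conformal(3) by (simp add: \<mu>_def field_simps)
  have "lor4 (reflected_derivative a g guu - (4 * lor3 a gu) *\<^sub>R (gu, 0)
     + (reflected_derivative a g gvv - (4 * lor3 a gv) *\<^sub>R (gv, 0))) \<eta>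
     = (4 * lor3 a g * lor3 a g - 2) * \<mu> * 2 - 4 * (lor3 a gu * lor3 a gu + lor3 a gv * lor3 a gv)"
    using second tangent conformal(1)
    by (simp add: normal_inner \<mu>_def algebra_simps del: scaleR_Pair)
  also have "\<dots> = 4 * lor3 a g * lor3 a g * \<mu>"
    by (simp add: parseval algebra_simps)
  also have "\<dots> = lor4 fu fu"
    using reflected_derivative_inner[OF tangent(1) tangent(1)] by (simp add: \<mu>_def)
  finally show ?thesis .
qed

lemma gauss_map: "(g, 1) = (1 / snd \<eta>) *\<^sub>R (\<eta> + (N, 0))"
  using canonical_normal(5) by (simp add: reflected_normal_def)

lemma orthogonal_basis: "lor4_orthogonal_basis fu fv \<eta> (N, 0)"
  using first_fundamental_form canonical_normal lor3_values(10) lor4_commute[of fu \<eta>] lor4_commute[of fv \<eta>]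
  by (simp add: lor4_orthogonal_basis_def)

end

definition reflected_surface :: "L3 \<Rightarrow> ('a \<Rightarrow> L3) \<Rightarrow> 'a \<Rightarrow> L4" where
  "reflected_surface a G p = (- a, 0) - (2 * lor3 a (G p)) *\<^sub>R (G p, 1)"

lemma fst_reflected_surface: "fst (reflected_surface a G p) = hyp_reflect (G p) a"
  by (simp add: reflected_surface_def hyp_reflect_def)

lemma has_derivative_reflected_surface:
  fixes g :: "complex \<Rightarrow> L3"
  assumes "g differentiable (at w)"
  shows "(reflected_surface a g has_derivative (\<lambda>d. reflected_derivative a (g w) (pd d g w))) (at w)"
  unfolding reflected_surface_def[abs_def] reflected_derivative_def
  by (rule derivative_eq_intros has_derivative_lor3 has_derivative_pd assms refl)+ (simp add: fun_eq_iff algebra_simps)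

lemma has_derivative_reflected_derivative:
  fixes g h :: "complex \<Rightarrow> L3"
  assumes "g differentiable (at w)" "h differentiable (at w)"
  shows "((\<lambda>v. reflected_derivative a (g v) (h v)) has_derivative (\<lambda>d. reflected_derivative a (g w) (pd d h w)
      - (2 * lor3 a (h w)) *\<^sub>R (pd d g w, 0) - (2 * lor3 a (pd d g w)) *\<^sub>R (h w, 0))) (at w)"
  unfolding reflected_derivative_def
  by (rule derivative_eq_intros has_derivative_lor3 has_derivative_pd assms refl)+ (simp add: fun_eq_iff algebra_simps)

lemma smooth_on_reflected_surface:
  assumes "open \<Omega>" "smooth_on \<Omega> g"
  shows "smooth_on \<Omega> (reflected_surface a g)"
proof -
  have "bounded_linear (\<lambda>x. - 2 * lor3 a x)"
    by (rule bounded_linear_const_mult bounded_bilinear.bounded_linear_right[OF bounded_bilinear_lor3])+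
  from smooth_on_linear[OF assms(1) this assms(2)]
  have S: "smooth_on \<Omega> (\<lambda>v. - 2 * lor3 a (g v))" .
  have "bounded_linear (\<lambda>x :: L3. (x, 0 :: real))"
    by (simp add: bounded_linear_Pair bounded_linear_ident bounded_linear_zero)
  from smooth_on_add[OF assms(1) smooth_on_linear[OF assms(1) this assms(2)] smooth_on_const]
  have "smooth_on \<Omega> (\<lambda>v. (g v, 0 :: real) + (0, 1))" .
  then have "smooth_on \<Omega> (\<lambda>v. (g v, 1 :: real))"
    by simp
  from smooth_on_add[OF assms(1) smooth_on_const[of _ "(- a, 0)"] smooth_on_bilinear[OF assms(1) bounded_bilinear_scaleR S this]]
  show ?thesis
    by (simp add: reflected_surface_def[abs_def])
qed

lemma pd_reflected_surface:
  "g differentiable (at w) \<Longrightarrow> pd d (reflected_surface a g) w = reflected_derivative a (g w) (pd d g w)"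
  using has_derivative_reflected_surface by (rule pd_eqI)

lemma pd_pd_reflected_surface:
  assumes "open \<Omega>" "smooth_on \<Omega> g" "w \<in> \<Omega>"
  shows "pd d (pd d (reflected_surface a g)) w
      = reflected_derivative a (g w) (pd d (pd d g) w) - (4 * lor3 a (pd d g w)) *\<^sub>R (pd d g w, 0)"
proof -
  have diff: "g differentiable (at v)" "pd d g differentiable (at v)" if "v \<in> \<Omega>" for v
    using that assms(1,2) smooth_on_pd by (blast intro: smooth_on_differentiable_at)+
  have double: "(2 * c) *\<^sub>R x + (2 * c) *\<^sub>R x = (4 * c) *\<^sub>R x" for c :: real and x :: L3
    by (simp add: scaleR_left_distrib[symmetric])
  have "pd d (pd d (reflected_surface a g)) w = pd d (\<lambda>v. reflected_derivative a (g v) (pd d g v)) w"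
    using pd_reflected_surface[OF diff(1)] by (rule pd_cong[OF assms(1,3)])
  also have "\<dots> = reflected_derivative a (g w) (pd d (pd d g) w) - (4 * lor3 a (pd d g w)) *\<^sub>R (pd d g w, 0)"
    using pd_eqI[OF has_derivative_reflected_derivative[where a = a, OF diff[OF assms(3)]], of d]
    by (simp add: double algebra_simps)
  finally show ?thesis .
qed

lemma reflected_frame_at:
  assumes "open \<Omega>" "smooth_on \<Omega> g" "\<And>v. v \<in> \<Omega> \<Longrightarrow> g v \<in> H2" "a \<in> H2" "w \<in> \<Omega>"
    and "lor3 (pd 1 g w) (pd 1 g w) = lor3 (pd \<i> g w) (pd \<i> g w)" "lor3 (pd 1 g w) (pd \<i> g w) = 0"
      "lor3 (pd 1 g w) (pd 1 g w) > 0"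
  shows "reflected_frame a (g w) (pd 1 g w) (pd \<i> g w) (pd 1 (pd 1 g) w) (pd \<i> (pd \<i> g) w)"
proof -
  have diff: "g differentiable (at v)" "pd d g differentiable (at v)" if "v \<in> \<Omega>" for v d
    using that assms(1,2) smooth_on_pd by (blast intro: smooth_on_differentiable_at)+
  have tangent: "lor3 (g v) (pd d g v) = 0" if "v \<in> \<Omega>" for v d
    using pd_lor3_eq_0_if_constant_on[OF assms(1) that diff(1,1)[OF that], where c = "-1" and d = d] assms(3)
    by (simp add: H2_def lor3_commute[of "pd d g v"])
  have "lor3 (g w) (pd d (pd d g) w) = - lor3 (pd d g w) (pd d g w)" for d
    using pd_lor3_eq_0_if_constant_on[OF assms(1,5) diff(1)[OF assms(5)] diff(2)[OF assms(5), of d],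
        where c = 0 and d = d] tangent
    by simp
  then show ?thesis
    using assms(3-8) tangent by unfold_locales auto
qed

lemma cmc_half_chart_reflected_surface:
  assumes "open \<Omega>" "smooth_on \<Omega> g" "\<And>w. w \<in> \<Omega> \<Longrightarrow> g w \<in> H2" "a \<in> H2"
    and conformal: "\<And>w. w \<in> \<Omega> \<Longrightarrow> lor3 (pd 1 g w) (pd 1 g w) = lor3 (pd \<i> g w) (pd \<i> g w)"
      "\<And>w. w \<in> \<Omega> \<Longrightarrow> lor3 (pd 1 g w) (pd \<i> g w) = 0"
      "\<And>w. w \<in> \<Omega> \<Longrightarrow> lor3 (pd 1 g w) (pd 1 g w) > 0"
  shows "cmc_half_chart \<Omega> (reflected_surface a g) g"
proof -
  have pd1: "pd d (reflected_surface a g) w = reflected_derivative a (g w) (pd d g w)" if "w \<in> \<Omega>" for w d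
    using smooth_on_differentiable_at[OF assms(2,1) that] by (rule pd_reflected_surface)
  note pd2 = pd_pd_reflected_surface[OF assms(1,2)]
  have frame: "reflected_frame a (g w) (pd 1 g w) (pd \<i> g w) (pd 1 (pd 1 g) w) (pd \<i> (pd \<i> g) w)"
    if "w \<in> \<Omega>" for w
    using reflected_frame_at[OF assms(1-4) that conformal[OF that]] .
  have normal_cases: "\<eta> = reflected_normal a (g w) \<or> \<eta> = - reflected_normal a (g w)"
    if "w \<in> \<Omega>" "unit_normal (reflected_surface a g) w \<eta>" for w \<eta>
    using that(2) reflected_frame.canonical_normal(4)[OF frame[OF that(1)]]
    by (intro lor4_unit_orthogonal_unique[OF reflected_frame.orthogonal_basis[OF frame[OF that(1)]]])
      (auto simp: unit_normal_def pd1[OF that(1)] fst_reflected_surface)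
  show ?thesis
  proof unfold_locales
    show "open \<Omega>" "smooth_on \<Omega> g"
      using assms(1,2) .
    show "smooth_on \<Omega> (reflected_surface a g)"
      using assms(1,2) by (rule smooth_on_reflected_surface)
    show "fst (reflected_surface a g w) \<in> H2" "g w \<in> H2" if "w \<in> \<Omega>" for w
      using hyp_reflect_H2[OF assms(3)[OF that] assms(4)] assms(3)[OF that]
      by (simp_all only: fst_reflected_surface)
  next
    fix w assume w: "w \<in> \<Omega>"
    show "lor4 (pd 1 (reflected_surface a g) w) (pd 1 (reflected_surface a g) w)
        = lor4 (pd \<i> (reflected_surface a g) w) (pd \<i> (reflected_surface a g) w)"
      "lor4 (pd 1 (reflected_surface a g) w) (pd \<i> (reflected_surface a g) w) = 0"
      "lor4 (pd 1 (reflected_surface a g) w) (pd 1 (reflected_surface a g) w) > 0"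
      using reflected_frame.first_fundamental_form[OF frame[OF w]] by (simp_all add: pd1[OF w])
    show "lor3 (pd 1 g w) (pd 1 g w) = lor3 (pd \<i> g w) (pd \<i> g w)" "lor3 (pd 1 g w) (pd \<i> g w) = 0"
      using conformal(1,2)[OF w] .
  next
    fix w \<eta> assume w: "w \<in> \<Omega>" and \<eta>: "unit_normal (reflected_surface a g) w \<eta>"
    note normal = reflected_frame.canonical_normal[OF frame[OF w]]
    show "snd \<eta> \<noteq> 0"
      using normal_cases[OF w \<eta>] normal(5) by auto
    assume "snd \<eta> > 0"
    then have \<eta>_eq: "\<eta> = reflected_normal a (g w)"
      using normal_cases[OF w \<eta>] normal(5) by auto
    show "mean_curv (reflected_surface a g) w \<eta> = 1/2"
      using reflected_frame.mean_curvature[OF frame[OF w]]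
        reflected_frame.first_fundamental_form(3)[OF frame[OF w]]
      by (simp add: mean_curv_def lap_def \<eta>_eq pd1[OF w] pd2[OF w])
    show "(g w, 1) = (1 / snd \<eta>) *\<^sub>R (\<eta> + (fst (reflected_surface a g w), 0))"
      using reflected_frame.gauss_map[OF frame[OF w]]
      by (simp only: \<eta>_eq fst_reflected_surface)
  qed
qed

lemma ball_chartsI: "(\<And>U \<phi>. (U, \<phi>) \<in> A \<Longrightarrow> P U \<phi>) \<Longrightarrow> \<forall>(U, \<phi>)\<in>A. P U \<phi>"
  by auto

lemma ball_chartsD: "\<forall>(U, \<phi>)\<in>A. P U \<phi> \<Longrightarrow> (U, \<phi>) \<in> A \<Longrightarrow> P U \<phi>"
  by auto

lemma cmc_half_charts_global:
  assumes "riemann_surface A"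
    and chart: "\<And>U \<phi>. (U, \<phi>) \<in> A \<Longrightarrow> cmc_half_chart (\<phi> ` U) (loc \<psi> U \<phi>) (loc G U \<phi>)"
  shows "conformal_immersion_H2R A \<psi>" "regular_vertical_projection A \<psi>" "cmc_canonical A \<psi> (1/2)"
    and "hyperbolic_gauss_map A \<psi> G"
proof -
  have loc_apply: "loc F U \<phi> (\<phi> p) = F p" if "(U, \<phi>) \<in> A" "p \<in> U" for F :: "'a \<Rightarrow> 'b" and U \<phi> p
    using loc_apply[OF chart_properties(2)[OF assms(1) that(1)] that(2)] .
  show "conformal_immersion_H2R A \<psi>"
    unfolding conformal_immersion_H2R_def Let_def
  proof (intro conjI allI ball_chartsI ballI)
    show "fst (\<psi> p) \<in> H2" for p
    proof -
      obtain U \<phi> where "(U, \<phi>) \<in> A" "p \<in> U"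
        using assms(1) unfolding riemann_surface_def by blast
      with cmc_half_chart.H2(1)[OF chart] show ?thesis
        by (metis image_eqI loc_apply)
    qed
    fix U \<phi> assume UA: "(U, \<phi>) \<in> A"
    show "smooth_on (\<phi> ` U) (loc \<psi> U \<phi>)"
      using cmc_half_chart.smooth(1)[OF chart[OF UA]] .
    fix z assume "z \<in> \<phi> ` U"
    with cmc_half_chart.conformal_f[OF chart[OF UA]]
    show "lor4 (pd 1 (loc \<psi> U \<phi>) z) (pd 1 (loc \<psi> U \<phi>) z) = lor4 (pd \<i> (loc \<psi> U \<phi>) z) (pd \<i> (loc \<psi> U \<phi>) z)"
      "lor4 (pd 1 (loc \<psi> U \<phi>) z) (pd \<i> (loc \<psi> U \<phi>) z) = 0"
      "lor4 (pd 1 (loc \<psi> U \<phi>) z) (pd 1 (loc \<psi> U \<phi>) z) > 0"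
      by simp_all
  qed
  show "regular_vertical_projection A \<psi>"
    unfolding regular_vertical_projection_def
  proof (intro ball_chartsI ballI allI impI)
    show "snd \<eta> \<noteq> 0" if "(U, \<phi>) \<in> A" "z \<in> \<phi> ` U" "unit_normal (loc \<psi> U \<phi>) z \<eta>" for U \<phi> z \<eta>
      using cmc_half_chart.regular[OF chart[OF that(1)] that(2,3)] .
  qed
  show "cmc_canonical A \<psi> (1/2)"
    unfolding cmc_canonical_def
  proof (intro ball_chartsI ballI allI impI)
    show "mean_curv (loc \<psi> U \<phi>) z \<eta> = 1/2"
      if "(U, \<phi>) \<in> A" "z \<in> \<phi> ` U" "unit_normal (loc \<psi> U \<phi>) z \<eta> \<and> snd \<eta> > 0" for U \<phi> z \<eta>
      using that(3) cmc_half_chart.cmc[OF chart[OF that(1)] that(2)] by blast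
  qed
  show "hyperbolic_gauss_map A \<psi> G"
    unfolding hyperbolic_gauss_map_def
  proof (intro ball_chartsI ballI allI impI)
    show "(G p, 1) = (1 / snd \<eta>) *\<^sub>R (\<eta> + (fst (\<psi> p), 0))"
      if "(U, \<phi>) \<in> A" "p \<in> U" "unit_normal (loc \<psi> U \<phi>) (\<phi> p) \<eta> \<and> snd \<eta> > 0" for U \<phi> p \<eta>
      using that(3) cmc_half_chart.gauss[OF chart[OF that(1)], of "\<phi> p" \<eta>] that(2)
      by (simp add: loc_apply[OF that(1,2)])
  qed
qed

theorem reflected_surface_cmc_half:
  assumes "riemann_surface A" "conformal_immersion_H2 A G" "a \<in> H2"
  shows "conformal_immersion_H2R A (reflected_surface a G)" "regular_vertical_projection A (reflected_surface a G)"
    and "cmc_canonical A (reflected_surface a G) (1/2)" "hyperbolic_gauss_map A (reflected_surface a G) G"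
proof -
  have "cmc_half_chart (\<phi> ` U) (loc (reflected_surface a G) U \<phi>) (loc G U \<phi>)" if UA: "(U, \<phi>) \<in> A" for U \<phi>
  proof -
    have G: "\<forall>p. G p \<in> H2" "smooth_on (\<phi> ` U) (loc G U \<phi>)"
      "\<forall>z\<in>\<phi> ` U. lor3 (pd 1 (loc G U \<phi>) z) (pd 1 (loc G U \<phi>) z) = lor3 (pd \<i> (loc G U \<phi>) z) (pd \<i> (loc G U \<phi>) z)
         \<and> lor3 (pd 1 (loc G U \<phi>) z) (pd \<i> (loc G U \<phi>) z) = 0"
      "\<forall>z\<in>\<phi> ` U. lor3 (pd 1 (loc G U \<phi>) z) (pd 1 (loc G U \<phi>) z) > 0"
      using assms(2) ball_chartsD[OF _ UA]
      unfolding conformal_immersion_H2_def conformal_H2_def Let_def by blast+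
    have "cmc_half_chart (\<phi> ` U) (reflected_surface a (loc G U \<phi>)) (loc G U \<phi>)"
    proof (rule cmc_half_chart_reflected_surface[OF chart_properties(1)[OF assms(1) UA] G(2) _ assms(3)])
      show "loc G U \<phi> w \<in> H2" for w
        using G(1) by (simp add: loc_def)
    qed (use G(3,4) in blast)+
    moreover have "loc (reflected_surface a G) U \<phi> = reflected_surface a (loc G U \<phi>)"
      by (simp add: loc_def reflected_surface_def fun_eq_iff)
    ultimately show ?thesis
      by simp
  qed
  then show "conformal_immersion_H2R A (reflected_surface a G)" "regular_vertical_projection A (reflected_surface a G)"
    "cmc_canonical A (reflected_surface a G) (1/2)" "hyperbolic_gauss_map A (reflected_surface a G) G"
    using cmc_half_charts_global[OF assms(1)] by blast+
qed

theorem mainTheorem12: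
  fixes A :: "('a::t2_space set \<times> ('a \<Rightarrow> complex)) set"
  assumes "riemann_surface A"
    and "connected (UNIV :: 'a set)"
  shows
   "(\<forall>(\<psi> :: 'a \<Rightarrow> L4) (G :: 'a \<Rightarrow> L3).
       conformal_immersion_H2R A \<psi> \<and> regular_vertical_projection A \<psi> \<and>
       cmc_canonical A \<psi> (1/2) \<and> hyperbolic_gauss_map A \<psi> G \<and> conformal_H2 A G
       \<longrightarrow> (\<exists>a\<in>H2. \<exists>c::real. \<forall>p.
              \<psi> p = (- a, c) - (2 * lor3 a (G p)) *\<^sub>R (G p, 1)))
    \<and>
    (\<forall>(G :: 'a \<Rightarrow> L3) a.
       conformal_immersion_H2 A G \<and> a \<in> H2 \<longrightarrow>
       (let \<psi> = (\<lambda>p. (- a, 0) - (2 * lor3 a (G p)) *\<^sub>R (G p, 1)) in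
          conformal_immersion_H2R A \<psi> \<and> regular_vertical_projection A \<psi> \<and>
          cmc_canonical A \<psi> (1/2) \<and> hyperbolic_gauss_map A \<psi> G))"
  using cmc_half_gauss_representation[OF assms] reflected_surface_cmc_half[OF assms(1)]
  unfolding reflected_surface_def[abs_def] Let_def by blast

end
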